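(* Let $M$ be a matroid on $E=[n]$ and let $(M_1,\dots,M_d)$ be a $d$-th symmetric quasi power of $M$. The following are equivalent: (i) $\mathrm{rk}(M_d)=\binom{\mathrm{rk}(M)+d-1}{d}$; (ii) for every basis $B$ of $M$, $\mathrm{Sym}_d(B)$ is a basis of $M_d$; (iii) $V(M_d)=B(M)$ as sets; (iv) for every $\omega\in B(M)$, the set $\{x\in\mathrm{Sym}_d(E): x(\omega)>0\}$ is a flat of $M_d$.
   Context: $\mathbb{T}=\mathbb{R}\cup\{\infty\}$. $\mathrm{Sym}_d(E)$: multisets of size $d$ from $E$, written multiplicatively ($\alpha\beta$ = multiset union), $\mathrm{Sym}_0(E)=\{1\}$; identified with degree-$d$ monomials in $x_1,\dots,x_n$. For $\alpha\in\mathrm{Sym}_{d-i}(E)$ and a matroid $N$ on $\mathrm{Sym}_d(E)$, $N|_\alpha$ is the restriction to $\{\alpha\beta:\beta\in\mathrm{Sym}_i(E)\}$. A $d$-th symmetric quasi power of $M$ is a sequence $(M_1,\dots,M_d)$ of matroids, $M_1=M$, $M_i$ on $\mathrm{Sym}_i(E)$, such that for every $1\le i\le d$ and $\alpha\in\mathrm{Sym}_{d-i}(E)$: if no element of $\alpha$ is a loop of $M$, $\beta\mapsto\alpha\beta$ is an isomorphism $M_i\cong M_d|_\alpha$; otherwise $\mathrm{rk}(M_d|_\alpha)=0$. For $x\in\mathrm{Sym}_d(E)$ and $\omega\in\mathbb{T}^n$, $x(\omega)=\sum_{j\in x}\omega_j$ (with multiplicity; $\infty$ if some term is $\infty$). For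 $C\subseteq\mathrm{Sym}_d(E)$, $V(p_C)$ is the set of $\omega\in\mathbb{T}^n$ such that $\min_{x\in C}x(\omega)$ is attained at least twice or equals $\infty$. The variety of $M_d$ is $V(M_d)=\bigcap_{C\text{ circuit of }M_d}V(p_C)\subseteq\mathbb{T}^n$, and the Bergman fan of $M$ is $B(M)=V(M_1)=\bigcap_{C\text{ circuit of }M}V(p_C)$. *)

theory Defs
  imports Main "HOL-Library.Multiset" "HOL-Library.Extended_Real"
begin

type_synonym 'a matroid = "'a set \<times> ('a set \<Rightarrow> bool)"

definition ground :: "'a matroid \<Rightarrow> 'a set" where "ground M = fst M"
definition indep :: "'a matroid \<Rightarrow> 'a set \<Rightarrow> bool" where "indep M X = snd M X"

definition is_matroid :: "'a matroid \<Rightarrow> bool" where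
  "is_matroid M \<longleftrightarrow>
     finite (ground M) \<and>
     (\<forall>X. indep M X \<longrightarrow> X \<subseteq> ground M) \<and>
     indep M {} \<and>
     (\<forall>X Y. indep M X \<and> Y \<subseteq> X \<longrightarrow> indep M Y) \<and>
     (\<forall>X Y. indep M X \<and> indep M Y \<and> card X < card Y \<longrightarrow>
        (\<exists>e\<in>Y - X. indep M (insert e X)))"

definition rank_of :: "'a matroid \<Rightarrow> 'a set \<Rightarrow> nat" where
  "rank_of M X = Max (card ` {Y. Y \<subseteq> X \<and> indep M Y})"

definition rk :: "'a matroid \<Rightarrow> nat" where
  "rk M = rank_of M (ground M)"

definition basis :: "'a matroid \<Rightarrow> 'a set \<Rightarrow> bool" where
  "basis M B \<longleftrightarrow> indep M B \<and> (\<forall>Y. indep M Y \<and> B \<subseteq> Y \<longrightarrow> Y = B)"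

definition circuit :: "'a matroid \<Rightarrow> 'a set \<Rightarrow> bool" where
  "circuit M C \<longleftrightarrow> C \<subseteq> ground M \<and> \<not> indep M C \<and> (\<forall>e\<in>C. indep M (C - {e}))"

definition flat :: "'a matroid \<Rightarrow> 'a set \<Rightarrow> bool" where
  "flat M F \<longleftrightarrow> F \<subseteq> ground M \<and>
     (\<forall>e \<in> ground M - F. rank_of M (insert e F) > rank_of M F)"

definition loop :: "'a matroid \<Rightarrow> 'a \<Rightarrow> bool" where
  "loop M e \<longleftrightarrow> e \<in> ground M \<and> \<not> indep M {e}"

definition restr :: "'a matroid \<Rightarrow> 'a set \<Rightarrow> 'a matroid" where
  "restr M A = (A, \<lambda>X. X \<subseteq> A \<and> indep M X)"

definition matroid_iso :: "('a \<Rightarrow> 'b) \<Rightarrow> 'a matroid \<Rightarrow> 'b matroid \<Rightarrow> bool" where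
  "matroid_iso f M N \<longleftrightarrow> bij_betw f (ground M) (ground N) \<and>
     (\<forall>X. X \<subseteq> ground M \<longrightarrow> (indep M X \<longleftrightarrow> indep N (f ` X)))"

text \<open>\<open>Sym d E\<close>: multisets of size d with elements from E (degree-d monomials).\<close>
definition Sym :: "nat \<Rightarrow> 'a set \<Rightarrow> 'a multiset set" where
  "Sym d E = {x. set_mset x \<subseteq> E \<and> size x = d}"

text \<open>Ground set E = [n] = {1..n}. \<open>Ms i\<close> is M_i for 1 \<le> i \<le> d.\<close>
definition sym_quasi_power ::
    "nat \<Rightarrow> nat matroid \<Rightarrow> nat \<Rightarrow> (nat \<Rightarrow> nat multiset matroid) \<Rightarrow> bool" where
  "sym_quasi_power n M d Ms \<longleftrightarrow>
     1 \<le> d \<and>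
     (\<forall>i\<in>{1..d}. is_matroid (Ms i) \<and> ground (Ms i) = Sym i {1..n}) \<and>
     (\<forall>Y. Y \<subseteq> {1..n} \<longrightarrow> (indep (Ms 1) ((\<lambda>e. {#e#}) ` Y) \<longleftrightarrow> indep M Y)) \<and>
     (\<forall>i\<in>{1..d}. \<forall>\<alpha>\<in>Sym (d - i) {1..n}.
        (if (\<forall>e\<in>#\<alpha>. \<not> loop M e)
         then matroid_iso (\<lambda>\<beta>. \<alpha> + \<beta>) (Ms i)
                (restr (Ms d) ((\<lambda>\<beta>. \<alpha> + \<beta>) ` Sym i {1..n}))
         else rk (restr (Ms d) ((\<lambda>\<beta>. \<alpha> + \<beta>) ` Sym i {1..n})) = 0))"

text \<open>\<open>\<T>^n\<close> with \<open>\<T> = \<real> \<union> {\<infinity>}\<close>: vectors indexed by 1..n with values in ereal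
  other than -\<infinity>; coordinates outside 1..n are normalized to 0.\<close>
definition tropn :: "nat \<Rightarrow> (nat \<Rightarrow> ereal) set" where
  "tropn n = {\<omega>. (\<forall>i\<in>{1..n}. \<omega> i \<noteq> -\<infinity>) \<and> (\<forall>i. i \<notin> {1..n} \<longrightarrow> \<omega> i = 0)}"

definition mon_eval :: "nat multiset \<Rightarrow> (nat \<Rightarrow> ereal) \<Rightarrow> ereal" where
  "mon_eval x \<omega> = sum_mset (image_mset \<omega> x)"

definition Vp :: "nat \<Rightarrow> ('a \<Rightarrow> (nat \<Rightarrow> ereal) \<Rightarrow> ereal) \<Rightarrow> 'a set \<Rightarrow> (nat \<Rightarrow> ereal) set" where
  "Vp n ev C = {\<omega>\<in>tropn n.
     (let m = Min ((\<lambda>x. ev x \<omega>) ` C) in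
       m = \<infinity> \<or> (\<exists>x\<in>C. \<exists>y\<in>C. x \<noteq> y \<and> ev x \<omega> = m \<and> ev y \<omega> = m))}"

definition tropV :: "nat \<Rightarrow> ('a \<Rightarrow> (nat \<Rightarrow> ereal) \<Rightarrow> ereal) \<Rightarrow> 'a matroid \<Rightarrow> (nat \<Rightarrow> ereal) set" where
  "tropV n ev N = tropn n \<inter> (\<Inter>C\<in>{C. circuit N C}. Vp n ev C)"

definition variety :: "nat \<Rightarrow> nat multiset matroid \<Rightarrow> (nat \<Rightarrow> ereal) set" where
  "variety n N = tropV n mon_eval N"

definition bergman_fan :: "nat \<Rightarrow> nat matroid \<Rightarrow> (nat \<Rightarrow> ereal) set" where
  "bergman_fan n M = tropV n (\<lambda>j \<omega>. \<omega> j) M"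

end

theory Submission
  imports Defs
begin

text \<open>
  For every basis \<open>B\<close> of \<open>M\<close> the monomials \<open>Sym d B\<close> span \<open>M\<^sub>d\<close>, because the quasi
  power contains a copy \<open>\<alpha> + E\<close> of \<open>M\<close> for every loopfree \<open>\<alpha>\<close>; as
  \<open>|Sym d B| = (rk M + d - 1 choose d)\<close>, this gives (i) \<open>\<longleftrightarrow>\<close> (ii).

  Lifting circuits of \<open>M\<close> to these copies shows \<open>V(M\<^sub>d) \<subseteq> B(M)\<close> in general. Under (ii), for
  \<open>\<omega> \<in> B(M)\<close> every loopfree monomial lies in an independent set of \<open>M\<^sub>d\<close> that spans
  each monomial by monomials of larger weight (assembled from \<open>\<omega>\<close>-maximal bases of \<open>M\<close>),
  so it is never the unique \<open>\<omega>\<close>-minimum of a circuit. Conversely, a point of \<open>B(M)\<close>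
  with weights \<open>(d + 1)\<^sup>j\<close> on an enumeration of \<open>B\<close> separates the monomials of
  \<open>Sym d B\<close>, so no circuit of \<open>M\<^sub>d\<close> lies in \<open>Sym d B\<close> if \<open>B(M) \<subseteq> V(M\<^sub>d)\<close>.

  Finally, a circuit violating the tropical condition at its unique minimum \<open>x\<close> becomes,
  after shifting \<open>\<omega>\<close> by a constant, a circuit leaving the set \<open>{x(\<omega>) > 0}\<close> only at \<open>x\<close>,
  which is impossible for a flat; and \<open>{x(\<omega>) > 0}\<close> is a flat whenever \<open>\<omega> \<in> V(M\<^sub>d)\<close>.
\<close>

section \<open>Matroids\<close>

locale matroid =
  fixes N :: "'a matroid"
  assumes is_matroid: "is_matroid N"
begin

lemma finite_ground: "finite (ground N)"
  using is_matroid unfolding is_matroid_def by blast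

lemma indep_subset_ground: "indep N X \<Longrightarrow> X \<subseteq> ground N"
  using is_matroid unfolding is_matroid_def by blast

lemma indep_empty: "indep N {}"
  using is_matroid unfolding is_matroid_def by blast

lemma indep_subset: "indep N X \<Longrightarrow> Y \<subseteq> X \<Longrightarrow> indep N Y"
  using is_matroid unfolding is_matroid_def by blast

lemma indep_augment:
  "indep N X \<Longrightarrow> indep N Y \<Longrightarrow> card X < card Y \<Longrightarrow> \<exists>e\<in>Y - X. indep N (insert e X)"
  using is_matroid unfolding is_matroid_def by blast

lemma indep_finite: "indep N X \<Longrightarrow> finite X"
  using indep_subset_ground finite_ground finite_subset by blast

lemma finite_indep_subsets: "finite {Y. Y \<subseteq> X \<and> indep N Y}"
  by (rule finite_subset[of _ "Pow (ground N)"]) (use indep_subset_ground finite_ground in auto)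

lemma card_le_rank_of: "Y \<subseteq> X \<Longrightarrow> indep N Y \<Longrightarrow> card Y \<le> rank_of N X"
  unfolding rank_of_def by (rule Max_ge) (use finite_indep_subsets in auto)

lemma ex_indep_rank_of: "\<exists>Y. Y \<subseteq> X \<and> indep N Y \<and> card Y = rank_of N X"
proof -
  have "rank_of N X \<in> card ` {Y. Y \<subseteq> X \<and> indep N Y}"
    unfolding rank_of_def by (rule Max_in) (use finite_indep_subsets indep_empty in auto)
  then show ?thesis by auto
qed

lemma rank_of_mono: "X \<subseteq> Y \<Longrightarrow> rank_of N X \<le> rank_of N Y"
  by (metis card_le_rank_of ex_indep_rank_of subset_trans)

lemma rank_of_le_card: "finite X \<Longrightarrow> rank_of N X \<le> card X"
  by (metis card_mono ex_indep_rank_of)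

lemma rank_of_indep: "indep N X \<Longrightarrow> rank_of N X = card X"
  by (metis antisym card_le_rank_of card_mono ex_indep_rank_of indep_finite order_refl)

lemma indep_iff_rank_of: "finite X \<Longrightarrow> indep N X \<longleftrightarrow> rank_of N X = card X"
  by (metis card_subset_eq ex_indep_rank_of rank_of_indep)

lemma rank_of_Int_ground: "rank_of N X = rank_of N (X \<inter> ground N)"
proof -
  have "{Y. Y \<subseteq> X \<and> indep N Y} = {Y. Y \<subseteq> X \<inter> ground N \<and> indep N Y}"
    using indep_subset_ground by auto
  then show ?thesis unfolding rank_of_def by simp
qed

lemma ex_indep_extension_rank_of:
  assumes "indep N I" "I \<subseteq> X"
  shows "\<exists>J. I \<subseteq> J \<and> J \<subseteq> X \<and> indep N J \<and> card J = rank_of N X"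
proof -
  define S where "S = {J. I \<subseteq> J \<and> J \<subseteq> X \<and> indep N J}"
  have fin: "finite S"
    by (rule finite_subset[OF _ finite_indep_subsets[of X]]) (auto simp: S_def)
  have "Max (card ` S) \<in> card ` S"
    by (rule Max_in) (use fin assms in \<open>auto simp: S_def\<close>)
  then obtain J where J: "J \<in> S" "card J = Max (card ` S)" by auto
  then have JS: "I \<subseteq> J" "J \<subseteq> X" "indep N J" by (auto simp: S_def)
  obtain K where K: "K \<subseteq> X" "indep N K" "card K = rank_of N X"
    using ex_indep_rank_of by blast
  have "\<not> card J < card K"
  proof
    assume "card J < card K"
    then obtain e where e: "e \<in> K - J" "indep N (insert e J)"
      using indep_augment[OF JS(3) K(2)] by blast
    then have "insert e J \<in> S" using JS K(1) by (auto simp: S_def)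
    then have "card (insert e J) \<le> card J" using fin J(2) by simp
    then show False using e indep_finite[OF JS(3)] by simp
  qed
  then show ?thesis using JS K card_le_rank_of[OF JS(2,3)] by (intro exI[of _ J]) simp
qed

lemma rank_of_submodular:
  "rank_of N (X \<union> Y) + rank_of N (X \<inter> Y) \<le> rank_of N X + rank_of N Y"
proof -
  obtain I where I: "I \<subseteq> X \<inter> Y" "indep N I" "card I = rank_of N (X \<inter> Y)"
    using ex_indep_rank_of by blast
  obtain J where J: "I \<subseteq> J" "J \<subseteq> X \<union> Y" "indep N J" "card J = rank_of N (X \<union> Y)"
    using ex_indep_extension_rank_of[of I "X \<union> Y"] I by auto
  have fin: "finite J" using J indep_finite by auto
  have "card (J \<inter> X) \<le> rank_of N X" "card (J \<inter> Y) \<le> rank_of N Y"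
    using J indep_subset card_le_rank_of by auto
  moreover have "card (J \<inter> X) + card (J \<inter> Y) = card J + card (J \<inter> X \<inter> Y)"
    using card_Un_Int[of "J \<inter> X" "J \<inter> Y"] fin J(2) by (simp add: Int_Un_distrib[symmetric]
        Int_absorb2 inf_assoc inf_left_commute)
  moreover have "card I \<le> card (J \<inter> X \<inter> Y)" using I J fin by (intro card_mono) auto
  ultimately show ?thesis using I J by linarith
qed

definition spans :: "'a set \<Rightarrow> 'a \<Rightarrow> bool" where
  "spans X y \<longleftrightarrow> rank_of N (insert y X) = rank_of N X"

lemma spans_member: "y \<in> X \<Longrightarrow> spans X y"
  unfolding spans_def by (simp add: insert_absorb)

lemma spans_mono:
  assumes "X \<subseteq> Y" "spans X y"
  shows "spans Y y"
proof -
  have "insert y X \<union> Y = insert y Y" using assms(1) by auto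
  then have "rank_of N (insert y Y) + rank_of N (insert y X \<inter> Y) \<le> rank_of N (insert y X) + rank_of N Y"
    using rank_of_submodular[of "insert y X" Y] by simp
  moreover have "rank_of N X \<le> rank_of N (insert y X \<inter> Y)" using assms by (intro rank_of_mono) auto
  moreover have "rank_of N Y \<le> rank_of N (insert y Y)" by (intro rank_of_mono) auto
  ultimately show ?thesis using assms(2) unfolding spans_def by linarith
qed

lemma rank_of_Un_spanned:
  assumes "\<forall>z\<in>Z. spans X z"
  shows "rank_of N (X \<union> Z) = rank_of N X"
proof -
  have "finite (Z \<inter> ground N)" using finite_ground by auto
  moreover have "\<forall>z\<in>Z \<inter> ground N. spans X z" using assms by blast
  ultimately have "rank_of N (X \<union> (Z \<inter> ground N)) = rank_of N X"
  proof (induction rule: finite_induct)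
    case (insert z Z)
    then have "spans (X \<union> Z) z" using spans_mono[of X "X \<union> Z" z] by auto
    then show ?case using insert unfolding spans_def by auto
  qed simp
  moreover have "(X \<union> Z) \<inter> ground N = (X \<union> (Z \<inter> ground N)) \<inter> ground N" by auto
  ultimately show ?thesis by (metis rank_of_Int_ground)
qed

lemma spans_trans:
  assumes "\<forall>z\<in>Z. spans X z" "spans Z y"
  shows "spans X y"
proof -
  have "spans (X \<union> Z) y" using spans_mono[OF _ assms(2)] by auto
  then have "rank_of N (insert y (X \<union> Z)) = rank_of N X"
    using rank_of_Un_spanned[OF assms(1)] unfolding spans_def by auto
  moreover have "rank_of N (insert y X) \<le> rank_of N (insert y (X \<union> Z))" by (intro rank_of_mono) auto
  moreover have "rank_of N X \<le> rank_of N (insert y X)" by (intro rank_of_mono) auto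
  ultimately show ?thesis unfolding spans_def by linarith
qed

lemma spans_iff_dependent:
  assumes "indep N X" "y \<notin> X"
  shows "spans X y \<longleftrightarrow> \<not> indep N (insert y X)"
proof -
  have "finite (insert y X)" using indep_finite[OF assms(1)] by simp
  then have "indep N (insert y X) \<longleftrightarrow> rank_of N (insert y X) = card X + 1"
    using indep_iff_rank_of assms by simp
  moreover have "rank_of N (insert y X) \<le> card X + 1"
    using rank_of_le_card[OF \<open>finite (insert y X)\<close>] assms indep_finite by simp
  moreover have "rank_of N X \<le> rank_of N (insert y X)" by (intro rank_of_mono) auto
  ultimately show ?thesis using rank_of_indep[OF assms(1)] unfolding spans_def by linarith
qed

lemma spans_loop:
  assumes "\<not> indep N {y}"
  shows "spans X y"
proof -
  obtain Y where Y: "Y \<subseteq> insert y X" "indep N Y" "card Y = rank_of N (insert y X)"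
    using ex_indep_rank_of by blast
  have "y \<notin> Y" using Y(2) assms indep_subset[of Y "{y}"] by blast
  then have "rank_of N (insert y X) \<le> rank_of N X"
    using Y card_le_rank_of[of Y X] by auto
  moreover have "rank_of N X \<le> rank_of N (insert y X)" by (intro rank_of_mono) auto
  ultimately show ?thesis unfolding spans_def by (rule antisym)
qed

lemma circuit_spans:
  assumes "circuit N C" "e \<in> C"
  shows "spans (C - {e}) e"
proof -
  have "indep N (C - {e})" "insert e (C - {e}) = C"
    using assms unfolding circuit_def by auto
  then show ?thesis using spans_iff_dependent assms(1) unfolding circuit_def by fastforce
qed

lemma circuit_finite: "circuit N C \<Longrightarrow> finite C"
  unfolding circuit_def using finite_ground finite_subset by blast

lemma circuit_nonempty: "circuit N C \<Longrightarrow> C \<noteq> {}"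
  unfolding circuit_def using indep_empty by blast

lemma dependent_contains_circuit:
  assumes "X \<subseteq> ground N" "\<not> indep N X"
  shows "\<exists>C\<subseteq>X. circuit N C"
proof -
  define P where "P k \<longleftrightarrow> (\<exists>D\<subseteq>X. \<not> indep N D \<and> card D = k)" for k
  have "\<exists>k. P k" using assms(2) unfolding P_def by auto
  then obtain k where "P k" and min: "\<And>m. m < k \<Longrightarrow> \<not> P m"
    unfolding exists_least_iff[of P] by auto
  then obtain D where D: "D \<subseteq> X" "\<not> indep N D" "card D = k" unfolding P_def by auto
  have fin: "finite D" using D(1) assms(1) finite_ground by (meson finite_subset subset_trans)
  have "indep N (D - {e})" if "e \<in> D" for e
    using min[of "card (D - {e})"] D card_Diff1_less[OF fin that] unfolding P_def by blast
  then have "circuit N D" using D(1,2) assms(1) unfolding circuit_def by auto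
  then show ?thesis using D(1) by auto
qed

lemma ex_fundamental_circuit:
  assumes "indep N I" "y \<in> ground N" "\<not> indep N (insert y I)"
  shows "\<exists>C. circuit N C \<and> C \<subseteq> insert y I \<and> y \<in> C"
proof -
  obtain C where C: "C \<subseteq> insert y I" "circuit N C"
    using dependent_contains_circuit[OF _ assms(3)] assms(2) indep_subset_ground[OF assms(1)] by auto
  moreover have "y \<in> C"
    using C indep_subset[OF assms(1), of C] unfolding circuit_def by blast
  ultimately show ?thesis by blast
qed

lemma rank_of_spanning_indep:
  assumes "indep N P" "P \<subseteq> A" "\<forall>y\<in>A. spans P y"
  shows "rank_of N A = card P"
  using rank_of_Un_spanned[OF assms(3)] rank_of_indep[OF assms(1)] assms(2)
  by (simp add: Un_absorb1)

lemma basis_indep: "basis N B \<Longrightarrow> indep N B"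
  unfolding basis_def by simp

lemma basis_spans:
  assumes "basis N B"
  shows "spans B y"
proof (cases "y \<in> B")
  case False
  then have "\<not> indep N (insert y B)" using assms unfolding basis_def by blast
  then show ?thesis using spans_iff_dependent False assms unfolding basis_def by blast
qed (rule spans_member)

lemma card_basis: "basis N B \<Longrightarrow> card B = rk N"
  unfolding rk_def
  by (rule rank_of_spanning_indep[symmetric]) (auto simp: basis_def basis_spans indep_subset_ground)

lemma basis_if_card_rk:
  assumes "indep N B" "card B = rk N"
  shows "basis N B"
  unfolding basis_def
proof (intro conjI allI impI)
  fix Y assume Y: "indep N Y \<and> B \<subseteq> Y"
  then have "card Y \<le> card B"
    using assms(2) card_le_rank_of[OF indep_subset_ground] unfolding rk_def by simp
  then show "Y = B" using Y card_seteq[OF indep_finite] by blast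
qed (rule assms(1))

lemma ex_basis_superset:
  assumes "indep N I"
  shows "\<exists>B. basis N B \<and> I \<subseteq> B"
  using ex_indep_extension_rank_of[OF assms indep_subset_ground[OF assms]] basis_if_card_rk
  unfolding rk_def by blast

lemma basis_exchange:
  assumes B: "basis N B" and C: "circuit N C" "C \<subseteq> insert y B" and y: "y \<notin> B"
    and b: "b \<in> C" "b \<noteq> y"
  shows "basis N (insert y (B - {b}))"
proof -
  have iB: "indep N B" and iBb: "indep N (B - {b})"
    using B indep_subset unfolding basis_def by auto
  have bB: "b \<in> B" using b C(2) by blast
  have "indep N (insert y (B - {b}))"
  proof (rule ccontr)
    assume "\<not> indep N (insert y (B - {b}))"
    then have "spans (B - {b}) y" using spans_iff_dependent[OF iBb] y by blast
    then have "\<forall>z\<in>C - {b}. spans (B - {b}) z" using C(2) by (auto intro: spans_member)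
    then have "spans (B - {b}) b" using spans_trans circuit_spans[OF C(1) b(1)] by simp
    moreover have "insert b (B - {b}) = B" using bB by blast
    ultimately show False using spans_iff_dependent[OF iBb, of b] iB by simp
  qed
  moreover have "card (insert y (B - {b})) = Suc (card (B - {b}))"
    using y indep_finite[OF iB] by simp
  then have "card (insert y (B - {b})) = rk N"
    using card_Suc_Diff1[OF indep_finite[OF iB] bB] card_basis[OF B] by linarith
  ultimately show ?thesis by (rule basis_if_card_rk)
qed

lemma flat_circuit_closed:
  assumes "flat N F" "circuit N C" "e \<in> C" "C - {e} \<subseteq> F"
  shows "e \<in> F"
proof (rule ccontr)
  assume "e \<notin> F"
  moreover have "e \<in> ground N" using assms(2,3) unfolding circuit_def by blast
  ultimately have "rank_of N F < rank_of N (insert e F)" using assms(1) unfolding flat_def by blast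
  moreover have "spans F e" using spans_mono[OF assms(4) circuit_spans[OF assms(2,3)]] .
  ultimately show False unfolding spans_def by simp
qed

lemma flat_if_circuit_closed:
  assumes "F \<subseteq> ground N" and closed: "\<And>C e. circuit N C \<Longrightarrow> e \<in> C \<Longrightarrow> C - {e} \<subseteq> F \<Longrightarrow> e \<in> F"
  shows "flat N F"
  unfolding flat_def
proof (intro conjI ballI assms(1))
  fix e assume e: "e \<in> ground N - F"
  obtain I where I: "I \<subseteq> F" "indep N I" "card I = rank_of N F"
    using ex_indep_rank_of by blast
  show "rank_of N F < rank_of N (insert e F)"
  proof (rule ccontr)
    assume "\<not> rank_of N F < rank_of N (insert e F)"
    moreover have "rank_of N (insert e I) \<le> rank_of N (insert e F)"
      using I(1) by (intro rank_of_mono) auto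
    moreover have "rank_of N (insert e F) \<ge> rank_of N F" by (intro rank_of_mono) auto
    ultimately have "rank_of N (insert e I) \<le> rank_of N I"
      using I rank_of_indep[OF I(2)] by linarith
    then have "spans I e"
      using rank_of_mono[of I "insert e I"] unfolding spans_def by (simp add: subset_insertI)
    then have "\<not> indep N (insert e I)" using spans_iff_dependent[OF I(2)] e I(1) by blast
    then obtain C where "circuit N C" "C \<subseteq> insert e I" "e \<in> C"
      using ex_fundamental_circuit[OF I(2)] e by blast
    then have "e \<in> F" using closed I(1) by blast
    then show False using e by blast
  qed
qed

text \<open>
  For a basis \<open>P\<close> and \<open>A = ground N\<close> this is the exchange criterion for \<open>P\<close> to have
  maximal total weight.
\<close>
definition upper_spanning :: "('a \<Rightarrow> 'b::order) \<Rightarrow> 'a set \<Rightarrow> 'a set \<Rightarrow> bool" where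
  "upper_spanning w P A \<longleftrightarrow> (\<forall>y\<in>A. spans (P \<inter> {z. w y \<le> w z}) y)"

lemma upper_spanning_spans: "upper_spanning w P A \<Longrightarrow> y \<in> A \<Longrightarrow> spans P y"
  unfolding upper_spanning_def using spans_mono[of _ P y] by blast

lemma upper_spanning_refl: "upper_spanning w P P"
  unfolding upper_spanning_def by (auto intro: spans_member)

lemma upper_spanning_mono:
  "upper_spanning w P A \<Longrightarrow> P \<subseteq> P' \<Longrightarrow> A' \<subseteq> A \<Longrightarrow> upper_spanning w P' A'"
  unfolding upper_spanning_def by (meson Int_mono order_refl spans_mono subsetD)

lemma upper_spanning_Un:
  "upper_spanning w P A \<Longrightarrow> upper_spanning w P A' \<Longrightarrow> upper_spanning w P (A \<union> A')"
  unfolding upper_spanning_def by blast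

lemma upper_spanning_trans:
  assumes "upper_spanning w Q A" "upper_spanning w P Q"
  shows "upper_spanning w P A"
  unfolding upper_spanning_def
proof
  fix y assume "y \<in> A"
  have "spans (P \<inter> {z. w y \<le> w z}) z" if "z \<in> Q \<inter> {z. w y \<le> w z}" for z
  proof -
    have "P \<inter> {u. w z \<le> w u} \<subseteq> P \<inter> {u. w y \<le> w u}" using that by (auto intro: order_trans)
    then show ?thesis using assms(2) that spans_mono unfolding upper_spanning_def by blast
  qed
  then show "spans (P \<inter> {z. w y \<le> w z}) y"
    using spans_trans assms(1) \<open>y \<in> A\<close> unfolding upper_spanning_def by blast
qed

text \<open>
  \<open>P'\<close> and \<open>Q'\<close> are both independent spanning sets of \<open>A'\<close>, hence equinumerous, and
  \<open>P' \<union> R\<close> spans \<open>Q' \<union> R\<close>.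
\<close>
lemma upper_spanning_exchange:
  assumes Q: "indep N (Q' \<union> R)" "upper_spanning w (Q' \<union> R) A" "Q' \<inter> R = {}"
    and Q': "Q' \<subseteq> A'" "\<forall>y\<in>A'. spans Q' y"
    and P': "P' \<subseteq> A'" "indep N P'" "upper_spanning w P' A'" "P' \<inter> R = {}"
  shows "indep N (P' \<union> R) \<and> upper_spanning w (P' \<union> R) A"
proof
  have iQ': "indep N Q'" and fin: "finite Q'" "finite R" "finite P'"
    using Q(1) P'(2) indep_subset indep_finite by blast+
  have "upper_spanning w (P' \<union> R) Q'" using upper_spanning_mono[OF P'(3) _ Q'(1)] by blast
  moreover have "upper_spanning w (P' \<union> R) R"
    using upper_spanning_mono[OF upper_spanning_refl, of R "P' \<union> R" R] by blast
  ultimately have up: "upper_spanning w (P' \<union> R) (Q' \<union> R)" by (rule upper_spanning_Un)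
  then show "upper_spanning w (P' \<union> R) A" using upper_spanning_trans Q(2) by blast
  have "card P' = card Q'"
    using rank_of_spanning_indep[OF P'(2,1)] rank_of_spanning_indep[OF iQ' Q'(1,2)]
      upper_spanning_spans[OF P'(3)] by simp
  then have "card (P' \<union> R) = card (Q' \<union> R)"
    using fin Q(3) P'(4) by (simp add: card_Un_disjoint)
  also have "\<dots> = rank_of N (Q' \<union> R)" using rank_of_indep[OF Q(1)] by simp
  also have "\<dots> \<le> rank_of N (P' \<union> R)"
    using rank_of_Un_spanned[of "Q' \<union> R" "P' \<union> R"] upper_spanning_spans[OF up]
      rank_of_mono[of "Q' \<union> R" "P' \<union> R \<union> (Q' \<union> R)"] by (simp add: sup_commute)
  finally show "indep N (P' \<union> R)"
    using rank_of_le_card[of "P' \<union> R"] fin indep_iff_rank_of by simp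
qed

lemma circuit_ex_le_if_upper_spanning:
  fixes w :: "'a \<Rightarrow> 'b::linorder"
  assumes "indep N P" "upper_spanning w P A" "circuit N C" "C \<subseteq> A" "x \<in> C" "x \<in> P"
  shows "\<exists>y\<in>C - {x}. w y \<le> w x"
proof (rule ccontr)
  assume "\<not> (\<exists>y\<in>C - {x}. w y \<le> w x)"
  then have "\<forall>y\<in>C - {x}. P \<inter> {z. w y \<le> w z} \<subseteq> P - {x}" by fastforce
  then have "\<forall>y\<in>C - {x}. spans (P - {x}) y"
    using assms(2,4) spans_mono unfolding upper_spanning_def by blast
  then have "spans (P - {x}) x" using spans_trans circuit_spans[OF assms(3,5)] by blast
  moreover have "indep N (P - {x})" "insert x (P - {x}) = P" using assms(1,6) indep_subset by auto
  ultimately show False using spans_iff_dependent[of "P - {x}" x] assms(1) by auto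
qed

lemma ex_circuit_below_if_not_upper_spanned:
  fixes w :: "'a \<Rightarrow> 'b::linorder"
  assumes B: "basis N B" and y: "y \<in> ground N" "\<not> spans (B \<inter> {z. w y \<le> w z}) y"
  shows "\<exists>C. circuit N C \<and> C \<subseteq> insert y B \<and> y \<in> C \<and> y \<notin> B \<and> (\<exists>b\<in>C - {y}. w b < w y)"
proof -
  have iB: "indep N B" by (rule basis_indep[OF B])
  have yB: "y \<notin> B" using y(2) spans_member by auto
  then have "\<not> indep N (insert y B)" using spans_iff_dependent[OF iB] basis_spans[OF B] by blast
  then obtain C where C: "circuit N C" "C \<subseteq> insert y B" "y \<in> C"
    using ex_fundamental_circuit[OF iB y(1)] by blast
  have "\<exists>b\<in>C - {y}. w b < w y"
  proof (rule ccontr)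
    assume "\<not> (\<exists>b\<in>C - {y}. w b < w y)"
    then have "C - {y} \<subseteq> B \<inter> {z. w y \<le> w z}" using C(2) by (auto simp: not_less)
    then show False using spans_mono circuit_spans[OF C(1,3)] y(2) by blast
  qed
  then show ?thesis using C yB by blast
qed

lemma max_weight_basis_exchange:
  fixes \<phi> :: "'a \<Rightarrow> nat"
  assumes B: "basis N B" "e \<in> B" and max: "\<And>B'. basis N B' \<Longrightarrow> e \<in> B' \<Longrightarrow> sum \<phi> B' \<le> sum \<phi> B"
    and C: "circuit N C" "C \<subseteq> insert y B" "y \<notin> B" "b \<in> C" "b \<noteq> y" "\<phi> b < \<phi> y"
  shows "b = e"
proof (rule ccontr)
  assume "b \<noteq> e"
  then have "sum \<phi> (insert y (B - {b})) \<le> sum \<phi> B"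
    using max basis_exchange[OF B(1) C(1-5)] B(2) by simp
  moreover have fin: "finite B" using indep_finite[OF basis_indep[OF B(1)]] .
  moreover have "b \<in> B" using C(2,4,5) by blast
  ultimately show False
    using C(3,6) sum.remove[OF fin \<open>b \<in> B\<close>, of \<phi>] by (simp add: sum.insert_remove)
qed

definition level :: "(nat \<Rightarrow> 'a) \<Rightarrow> nat \<Rightarrow> 'a \<Rightarrow> nat" where
  "level f r e = Max {k. k < r \<and> spans (f ` {k..<r}) e}"

lemma le_level: "k < r \<Longrightarrow> spans (f ` {k..<r}) e \<Longrightarrow> k \<le> level f r e"
  unfolding level_def by (rule Max_ge) auto

lemma level_spans:
  assumes "k < r" "spans (f ` {k..<r}) e"
  shows "level f r e < r \<and> spans (f ` {level f r e..<r}) e"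
proof -
  have "level f r e \<in> {k. k < r \<and> spans (f ` {k..<r}) e}"
    unfolding level_def by (rule Max_in) (use assms in auto)
  then show ?thesis by simp
qed

lemma level_basis_spans:
  assumes "basis N (f ` {0..<r})" "indep N {e}"
  shows "level f r e < r \<and> spans (f ` {level f r e..<r}) e"
proof -
  have "\<not> spans {} e" using spans_iff_dependent[OF indep_empty] assms(2) by simp
  then have "0 < r" using basis_spans[OF assms(1), of e] by (cases r) auto
  then show ?thesis using level_spans basis_spans[OF assms(1)] by blast
qed

lemma level_enum:
  assumes "inj_on f {0..<r}" "indep N (f ` {0..<r})" "j < r"
  shows "level f r (f j) = j"
proof -
  have j: "spans (f ` {j..<r}) (f j)" using assms(3) by (intro spans_member) auto
  have "\<not> j < level f r (f j)"
  proof
    assume lt: "j < level f r (f j)"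
    have "f ` {level f r (f j)..<r} \<subseteq> f ` {0..<r} - {f j}"
      using lt assms(1,3) unfolding inj_on_def by (auto, metis atLeastLessThan_iff le0 leD)
    then have "spans (f ` {0..<r} - {f j}) (f j)"
      using level_spans[OF assms(3) j] spans_mono by blast
    moreover have "indep N (f ` {0..<r} - {f j})" using assms(2) indep_subset by blast
    moreover have "insert (f j) (f ` {0..<r} - {f j}) = f ` {0..<r}" using assms(3) by auto
    ultimately show False using spans_iff_dependent[of "f ` {0..<r} - {f j}" "f j"] assms(2) by simp
  qed
  then show ?thesis using le_level[OF assms(3) j] by simp
qed

lemma circuit_ex_level_le:
  assumes B: "basis N (f ` {0..<r})" and C: "circuit N C" "x \<in> C" and x: "indep N {x}"
  shows "\<exists>y\<in>C - {x}. indep N {y} \<and> level f r y \<le> level f r x"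
proof (rule ccontr)
  assume above: "\<not> (\<exists>y\<in>C - {x}. indep N {y} \<and> level f r y \<le> level f r x)"
  have "spans (f ` {Suc (level f r x)..<r}) y" if "y \<in> C - {x}" for y
  proof (cases "indep N {y}")
    case True
    then have "Suc (level f r x) \<le> level f r y" using above that by auto
    then have "f ` {level f r y..<r} \<subseteq> f ` {Suc (level f r x)..<r}" by auto
    then show ?thesis using level_basis_spans[OF B True] spans_mono by blast
  qed (rule spans_loop)
  then have "spans (f ` {Suc (level f r x)..<r}) x" using spans_trans circuit_spans[OF C] by blast
  moreover have "\<not> spans {} x" using spans_iff_dependent[OF indep_empty] x by simp
  ultimately show False using le_level[of "Suc (level f r x)" r f x] by (cases "Suc (level f r x) < r") auto
qed

end

lemma rank_of_image:
  assumes "inj_on h X" "\<And>Y. Y \<subseteq> X \<Longrightarrow> indep N (h ` Y) \<longleftrightarrow> indep M Y"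
  shows "rank_of N (h ` X) = rank_of M X"
proof -
  have "{Z. Z \<subseteq> h ` X \<and> indep N Z} = image h ` {Y. Y \<subseteq> X \<and> indep M Y}"
  proof (intro equalityI subsetI)
    fix Z assume "Z \<in> {Z. Z \<subseteq> h ` X \<and> indep N Z}"
    then obtain Y where "Y \<subseteq> X" "Z = h ` Y" "indep N Z" by (auto elim!: subset_imageE)
    then show "Z \<in> image h ` {Y. Y \<subseteq> X \<and> indep M Y}" using assms(2) by blast
  qed (use assms(2) in \<open>auto intro: image_mono\<close>)
  moreover have "card (h ` Y) = card Y" if "Y \<subseteq> X" for Y
    using card_image inj_on_subset[OF assms(1) that] by blast
  ultimately have "card ` {Z. Z \<subseteq> h ` X \<and> indep N Z} = card ` {Y. Y \<subseteq> X \<and> indep M Y}"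
    by (simp add: image_image)
  then show ?thesis unfolding rank_of_def by simp
qed

lemma ex_nat_rank:
  fixes w :: "'a \<Rightarrow> 'b::linorder"
  assumes "finite A"
  shows "\<exists>\<phi> :: 'a \<Rightarrow> nat. \<forall>b. \<forall>y\<in>A. w b < w y \<longrightarrow> \<phi> b < \<phi> y"
proof (intro exI allI ballI impI)
  fix b y assume y: "y \<in> A" "w b < w y"
  have "{v \<in> w ` A. v \<le> w b} \<subseteq> {v \<in> w ` A. v \<le> w y}"
    using y(2) by (auto dest: order.trans[OF _ less_imp_le])
  moreover have "w y \<in> {v \<in> w ` A. v \<le> w y}" "w y \<notin> {v \<in> w ` A. v \<le> w b}" using y by auto
  ultimately have "{v \<in> w ` A. v \<le> w b} \<subset> {v \<in> w ` A. v \<le> w y}" by blast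
  then show "card {v \<in> w ` A. v \<le> w b} < card {v \<in> w ` A. v \<le> w y}"
    using assms by (intro psubset_card_mono) auto
qed

section \<open>Symmetric powers and monomial weights\<close>

lemma Sym_0: "Sym 0 A = {{#}}"
  by (auto simp: Sym_def)

lemma Sym_empty: "0 < i \<Longrightarrow> Sym i {} = {}"
  by (auto simp: Sym_def)

lemma Sym_mono: "A \<subseteq> B \<Longrightarrow> Sym i A \<subseteq> Sym i B"
  by (auto simp: Sym_def)

lemma add_mem_Sym: "a \<in> Sym i A \<Longrightarrow> b \<in> Sym j A \<Longrightarrow> a + b \<in> Sym (i + j) A"
  by (simp add: Sym_def)

lemma Sym_ex_mem: "a \<in> Sym i A \<Longrightarrow> 0 < i \<Longrightarrow> \<exists>e. e \<in># a"
  by (cases a) (auto simp: Sym_def)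

lemma add_singleton_mem_Sym: "a \<in> Sym i A \<Longrightarrow> e \<in> A \<Longrightarrow> a + {#e#} \<in> Sym (Suc i) A"
  by (simp add: Sym_def)

lemma diff_singleton_mem_Sym: "a \<in> Sym i A \<Longrightarrow> e \<in># a \<Longrightarrow> a - {#e#} \<in> Sym (i - 1) A"
  by (auto simp: Sym_def size_Diff_singleton dest: in_diffD)

lemma finite_Sym: "finite A \<Longrightarrow> finite (Sym i A)"
  by (simp add: Sym_def finite_multisets_of_size[unfolded multisets_of_size_def])

lemma card_Sym: "finite A \<Longrightarrow> card (Sym i A) = (card A + i - 1) choose i"
  by (simp add: Sym_def card_multisets_of_size[unfolded multisets_of_size_def])

lemma image_add_Sym_Suc:
  assumes "e \<in> B"
  shows "(+) \<gamma> ` Sym (Suc k) B = (+) (\<gamma> + {#e#}) ` Sym k B \<union> (+) \<gamma> ` Sym (Suc k) (B - {e})"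
proof (intro equalityI subsetI)
  fix x assume "x \<in> (+) \<gamma> ` Sym (Suc k) B"
  then obtain b where b: "b \<in> Sym (Suc k) B" "x = \<gamma> + b" by blast
  show "x \<in> (+) (\<gamma> + {#e#}) ` Sym k B \<union> (+) \<gamma> ` Sym (Suc k) (B - {e})"
  proof (cases "e \<in># b")
    case True
    then have "x = \<gamma> + {#e#} + (b - {#e#})" using b(2) by simp
    then show ?thesis using diff_singleton_mem_Sym[OF b(1) True] by auto
  next
    case False
    then show ?thesis using b by (auto simp: Sym_def)
  qed
next
  fix x assume "x \<in> (+) (\<gamma> + {#e#}) ` Sym k B \<union> (+) \<gamma> ` Sym (Suc k) (B - {e})"
  then show "x \<in> (+) \<gamma> ` Sym (Suc k) B"
  proof
    assume "x \<in> (+) (\<gamma> + {#e#}) ` Sym k B"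
    then obtain b where "b \<in> Sym k B" "x = \<gamma> + ({#e#} + b)" by (auto simp: ac_simps)
    then show ?thesis using assms by (intro rev_image_eqI[of "{#e#} + b"]) (auto simp: Sym_def)
  qed (use Sym_mono[of "B - {e}" B] in blast)
qed

lemma image_add_Sym_disjoint:
  "(+) (\<gamma> + {#e#}) ` S \<inter> (+) \<gamma> ` Sym i (B - {e}) = {}"
proof -
  have "count x e \<noteq> count \<gamma> e" if "x \<in> (+) (\<gamma> + {#e#}) ` S" for x
    using that by auto
  moreover have "count x e = count \<gamma> e" if "x \<in> (+) \<gamma> ` Sym i (B - {e})" for x
    using that by (auto simp: Sym_def not_in_iff[symmetric])
  ultimately show ?thesis by blast
qed

lemma mon_eval_add: "mon_eval (a + b) \<omega> = mon_eval a \<omega> + mon_eval b \<omega>"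
  by (simp add: mon_eval_def)

lemma mon_eval_singleton: "mon_eval {#e#} \<omega> = \<omega> e"
  by (simp add: mon_eval_def)

lemma mon_eval_add_mset: "mon_eval (add_mset a x) \<omega> = \<omega> a + mon_eval x \<omega>"
  by (simp add: mon_eval_def)

lemma mon_eval_finite:
  "(\<And>e. e \<in># x \<Longrightarrow> \<bar>\<omega> e\<bar> \<noteq> \<infinity>) \<Longrightarrow> \<bar>mon_eval x \<omega>\<bar> \<noteq> \<infinity>"
proof (induction x)
  case (add a x)
  then have "\<bar>\<omega> a\<bar> \<noteq> \<infinity>" "\<bar>mon_eval x \<omega>\<bar> \<noteq> \<infinity>" by auto
  then show ?case unfolding mon_eval_add_mset by (cases "\<omega> a"; cases "mon_eval x \<omega>") auto
qed (simp add: mon_eval_def)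

lemma mon_eval_neq_minf:
  "(\<And>e. e \<in># x \<Longrightarrow> \<omega> e \<noteq> -\<infinity>) \<Longrightarrow> mon_eval x \<omega> \<noteq> -\<infinity>"
proof (induction x)
  case (add a x)
  then have "\<omega> a \<noteq> -\<infinity>" "mon_eval x \<omega> \<noteq> -\<infinity>" by auto
  then show ?case unfolding mon_eval_add_mset by (cases "\<omega> a"; cases "mon_eval x \<omega>") auto
qed (simp add: mon_eval_def)

lemma mon_eval_shift:
  assumes "set_mset z \<subseteq> A" "\<And>e. e \<in> A \<Longrightarrow> \<omega> e \<noteq> -\<infinity>"
  shows "mon_eval z (\<lambda>j. if j \<in> A then \<omega> j - ereal c else \<omega> j) = mon_eval z \<omega> - ereal (real (size z) * c)"
  using assms(1)
proof (induction z)
  case (add a z)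
  then have "\<omega> a \<noteq> -\<infinity>" "mon_eval z \<omega> \<noteq> -\<infinity>"
    using assms(2) mon_eval_neq_minf[of z \<omega>] by auto
  with add show ?case
    unfolding mon_eval_add_mset by (cases "\<omega> a"; cases "mon_eval z \<omega>") (auto simp: algebra_simps)
qed (simp add: mon_eval_def zero_ereal_def)

lemma mon_eval_infinity: "e \<in># x \<Longrightarrow> \<omega> e = \<infinity> \<Longrightarrow> mon_eval x \<omega> = \<infinity>"
  by (metis insert_DiffM mon_eval_add mon_eval_singleton add_mset_add_single plus_ereal.simps(2)
      add.commute)

lemma digits_sum_less:
  fixes K :: nat
  assumes "\<forall>j<r. c j < K"
  shows "(\<Sum>j<r. c j * K ^ j) < K ^ r"
  using assms
proof (induction r)
  case (Suc r)
  then have "(\<Sum>j<Suc r. c j * K ^ j) < (c r + 1) * K ^ r" by (simp add: algebra_simps)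
  also have "\<dots> \<le> K * K ^ r" using Suc.prems by (intro mult_right_mono) auto
  finally show ?case by simp
qed simp

lemma digits_sum_inj:
  fixes K :: nat
  assumes "\<forall>j<r. c j < K" "\<forall>j<r. c' j < K" "(\<Sum>j<r. c j * K ^ j) = (\<Sum>j<r. c' j * K ^ j)"
  shows "\<forall>j<r. c j = c' j"
  using assms
proof (induction r)
  case (Suc r)
  define S where "S = (\<Sum>j<r. c j * K ^ j)"
  define S' where "S' = (\<Sum>j<r. c' j * K ^ j)"
  have less: "S < K ^ r" "S' < K ^ r"
    unfolding S_def S'_def using Suc.prems by (auto intro: digits_sum_less)
  have eq: "S + c r * K ^ r = S' + c' r * K ^ r" using Suc.prems(3) unfolding S_def S'_def by simp
  moreover have "K ^ r \<noteq> 0" using less by linarith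
  ultimately have "c r + S div K ^ r = c' r + S' div K ^ r"
    using div_mult_self1[of "K ^ r" S "c r"] div_mult_self1[of "K ^ r" S' "c' r"] eq by simp
  then have "c r = c' r" using less by simp
  moreover have "\<forall>j<r. c j = c' j"
    using Suc.IH Suc.prems eq \<open>c r = c' r\<close> unfolding S_def S'_def by simp
  ultimately show ?case using less_Suc_eq by auto
qed simp

lemma mon_eval_digits:
  fixes K :: nat
  assumes "inj_on f {0..<r}" "\<forall>j<r. \<omega> (f j) = ereal (K ^ j)" "set_mset z \<subseteq> f ` {0..<r}"
  shows "mon_eval z \<omega> = ereal (\<Sum>j<r. count z (f j) * K ^ j)"
  using assms(3)
proof (induction z)
  case (add a z)
  have "a \<in> f ` {0..<r}" using add.prems by simp
  then obtain i where i: "i < r" "f i = a" by auto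
  have "count (add_mset a z) (f j) * K ^ j = count z (f j) * K ^ j + (if j = i then K ^ j else 0)"
    if "j < r" for j
    using inj_on_eq_iff[OF assms(1), of j i] i that by auto
  then have "(\<Sum>j<r. count (add_mset a z) (f j) * K ^ j)
      = (\<Sum>j<r. count z (f j) * K ^ j + (if j = i then K ^ j else 0))"
    by (intro sum.cong) auto
  also have "\<dots> = (\<Sum>j<r. count z (f j) * K ^ j) + K ^ i" using i(1) by (simp add: sum.distrib)
  finally have sum_eq: "(\<Sum>j<r. count (add_mset a z) (f j) * K ^ j) = (\<Sum>j<r. count z (f j) * K ^ j) + K ^ i" .
  have "mon_eval (add_mset a z) \<omega> = ereal (K ^ i) + ereal (\<Sum>j<r. count z (f j) * K ^ j)"
    using add assms(2)[rule_format, OF i(1)] i(2) by (simp add: mon_eval_add_mset)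
  then show ?case unfolding sum_eq by simp
qed (simp add: mon_eval_def)

lemma inj_on_digits:
  fixes K :: nat
  assumes "A \<subseteq> {z. set_mset z \<subseteq> f ` {0..<r} \<and> size z < K}"
  shows "inj_on (\<lambda>z. \<Sum>j<r. count z (f j) * K ^ j) A"
proof (rule inj_onI)
  fix z z' assume z: "z \<in> A" "z' \<in> A"
    and eq: "(\<Sum>j<r. count z (f j) * K ^ j) = (\<Sum>j<r. count z' (f j) * K ^ j)"
  have "count x a < K" if "x \<in> A" for x a
    using count_le_size[of x a] assms that by fastforce
  then have digits_eq: "\<forall>j<r. count z (f j) = count z' (f j)"
    using z eq by (intro digits_sum_inj) auto
  show "z = z'"
  proof (rule multiset_eqI)
    fix a show "count z a = count z' a"
    proof (cases "a \<in> f ` {0..<r}")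
      case True
      then show ?thesis using digits_eq by auto
    next
      case False
      then have "a \<notin># z" "a \<notin># z'" using z assms by blast+
      then show ?thesis by (simp add: not_in_iff)
    qed
  qed
qed

section \<open>Tropical varieties of matroids\<close>

lemma mem_Vp_iff:
  assumes "finite C" "C \<noteq> {}"
  shows "\<omega> \<in> Vp n ev C \<longleftrightarrow>
    \<omega> \<in> tropn n \<and> (\<forall>x\<in>C. ev x \<omega> \<noteq> \<infinity> \<longrightarrow> (\<exists>y\<in>C - {x}. ev y \<omega> \<le> ev x \<omega>))"
proof -
  define m where "m = Min ((\<lambda>x. ev x \<omega>) ` C)"
  have m_le: "m \<le> ev x \<omega>" if "x \<in> C" for x
    unfolding m_def using assms(1) that by simp
  have "m \<in> (\<lambda>x. ev x \<omega>) ` C" unfolding m_def using assms by (intro Min_in) auto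
  then obtain x0 where x0: "x0 \<in> C" "ev x0 \<omega> = m" by auto
  have "(m = \<infinity> \<or> (\<exists>x\<in>C. \<exists>y\<in>C. x \<noteq> y \<and> ev x \<omega> = m \<and> ev y \<omega> = m)) \<longleftrightarrow>
      (\<forall>x\<in>C. ev x \<omega> \<noteq> \<infinity> \<longrightarrow> (\<exists>y\<in>C - {x}. ev y \<omega> \<le> ev x \<omega>))"
  proof (intro iffI ballI impI)
    fix x assume x: "x \<in> C" "ev x \<omega> \<noteq> \<infinity>"
    assume "m = \<infinity> \<or> (\<exists>x\<in>C. \<exists>y\<in>C. x \<noteq> y \<and> ev x \<omega> = m \<and> ev y \<omega> = m)"
    moreover have "m \<noteq> \<infinity>" using m_le[OF x(1)] x(2) by auto
    ultimately obtain a b where "a \<in> C" "b \<in> C" "a \<noteq> b" "ev a \<omega> = m" "ev b \<omega> = m" by blast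
    then show "\<exists>y\<in>C - {x}. ev y \<omega> \<le> ev x \<omega>"
      using m_le[OF x(1)] by (cases "a = x") (auto intro: bexI[of _ b] bexI[of _ a])
  next
    assume H: "\<forall>x\<in>C. ev x \<omega> \<noteq> \<infinity> \<longrightarrow> (\<exists>y\<in>C - {x}. ev y \<omega> \<le> ev x \<omega>)"
    show "m = \<infinity> \<or> (\<exists>x\<in>C. \<exists>y\<in>C. x \<noteq> y \<and> ev x \<omega> = m \<and> ev y \<omega> = m)"
    proof (cases "m = \<infinity>")
      case False
      then obtain y where "y \<in> C - {x0}" "ev y \<omega> \<le> m" using H x0 by auto
      then show ?thesis using x0 m_le[of y] by auto
    qed simp
  qed
  then show ?thesis unfolding Vp_def m_def Let_def by simp
qed

context matroid
begin

lemma mem_tropV_iff: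
  "\<omega> \<in> tropV n ev N \<longleftrightarrow> \<omega> \<in> tropn n \<and>
    (\<forall>C. circuit N C \<longrightarrow> (\<forall>x\<in>C. ev x \<omega> \<noteq> \<infinity> \<longrightarrow> (\<exists>y\<in>C - {x}. ev y \<omega> \<le> ev x \<omega>)))"
  by (auto simp: tropV_def mem_Vp_iff circuit_finite circuit_nonempty)

lemma tropV_not_inj_on_circuit:
  assumes "\<omega> \<in> tropV n ev N" "circuit N C" "\<forall>x\<in>C. ev x \<omega> \<noteq> \<infinity>"
  shows "\<not> inj_on (\<lambda>x. ev x \<omega>) C"
proof
  assume inj: "inj_on (\<lambda>x. ev x \<omega>) C"
  have "Min ((\<lambda>x. ev x \<omega>) ` C) \<in> (\<lambda>x. ev x \<omega>) ` C"
    using circuit_finite[OF assms(2)] circuit_nonempty[OF assms(2)] by (intro Min_in) auto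
  then obtain x where x: "x \<in> C" "ev x \<omega> = Min ((\<lambda>x. ev x \<omega>) ` C)" by auto
  then obtain y where y: "y \<in> C - {x}" "ev y \<omega> \<le> ev x \<omega>"
    using assms mem_tropV_iff by blast
  then have "ev y \<omega> = ev x \<omega>" using x circuit_finite[OF assms(2)] by (simp add: antisym)
  then show False using inj x(1) y(1) unfolding inj_on_def by blast
qed

end

section \<open>Symmetric quasi powers\<close>

locale symmetric_quasi_power =
  fixes n d :: nat and M :: "nat matroid" and Ms :: "nat \<Rightarrow> nat multiset matroid"
  assumes matroid_M: "is_matroid M" and ground_M: "ground M = {1..n}"
    and quasi_power: "sym_quasi_power n M d Ms"
begin

abbreviation "E \<equiv> {1..n}"
abbreviation "N \<equiv> Ms d"

definition loopfree :: "nat multiset \<Rightarrow> bool" where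
  "loopfree \<gamma> \<longleftrightarrow> (\<forall>e\<in>#\<gamma>. \<not> loop M e)"

lemma d_pos: "0 < d"
  using quasi_power unfolding sym_quasi_power_def by simp

lemma matroid_Ms: "i \<in> {1..d} \<Longrightarrow> is_matroid (Ms i)"
  using quasi_power unfolding sym_quasi_power_def by blast

lemma ground_Ms: "i \<in> {1..d} \<Longrightarrow> ground (Ms i) = Sym i E"
  using quasi_power unfolding sym_quasi_power_def by blast

lemma ground_N: "ground N = Sym d E"
  using ground_Ms d_pos by simp

sublocale M: matroid M
  by (rule matroid.intro[OF matroid_M])

sublocale N: matroid N
  using matroid_Ms d_pos by (intro matroid.intro) simp

lemma indep_singleton_iff_not_loop: "e \<in> E \<Longrightarrow> indep M {e} \<longleftrightarrow> \<not> loop M e"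
  using ground_M unfolding loop_def by simp

lemma loopfree_if_indep: "indep M B \<Longrightarrow> set_mset \<gamma> \<subseteq> B \<Longrightarrow> loopfree \<gamma>"
  unfolding loopfree_def loop_def using M.indep_subset by blast

lemma quasi_power_restr:
  assumes "i \<in> {1..d}" "\<alpha> \<in> Sym (d - i) E"
  shows "if loopfree \<alpha> then matroid_iso ((+) \<alpha>) (Ms i) (restr N ((+) \<alpha> ` Sym i E))
    else rk (restr N ((+) \<alpha> ` Sym i E)) = 0"
  using quasi_power assms unfolding sym_quasi_power_def loopfree_def by blast

lemma indep_add_iff:
  assumes i: "i \<in> {1..d}" and \<gamma>: "\<gamma> \<in> Sym (d - i) E" "loopfree \<gamma>" and X: "X \<subseteq> Sym i E"
  shows "indep N ((+) \<gamma> ` X) \<longleftrightarrow> indep (Ms i) X"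
proof -
  have "matroid_iso ((+) \<gamma>) (Ms i) (restr N ((+) \<gamma> ` Sym i E))"
    using quasi_power_restr[OF i \<gamma>(1)] \<gamma>(2) by simp
  then have "indep (Ms i) X \<longleftrightarrow> indep (restr N ((+) \<gamma> ` Sym i E)) ((+) \<gamma> ` X)"
    using X ground_Ms[OF i] unfolding matroid_iso_def by blast
  then show ?thesis using X unfolding restr_def indep_def by auto
qed

lemma rank_of_add_Sym_loop:
  assumes i: "i \<in> {1..d}" and \<gamma>: "\<gamma> \<in> Sym (d - i) E" and e: "e \<in># \<gamma>" "loop M e"
  shows "rank_of N ((+) \<gamma> ` Sym i E) = 0"
proof -
  have "\<not> loopfree \<gamma>" using e unfolding loopfree_def by auto
  then have "rk (restr N ((+) \<gamma> ` Sym i E)) = 0"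
    using quasi_power_restr[OF i \<gamma>] by (simp only: if_False)
  then show ?thesis unfolding rk_def rank_of_def by (simp add: ground_def restr_def indep_def)
qed

lemma indep_add_singletons_iff:
  assumes "\<gamma> \<in> Sym (d - 1) E" "loopfree \<gamma>" "Y \<subseteq> E"
  shows "indep N ((\<lambda>e. \<gamma> + {#e#}) ` Y) \<longleftrightarrow> indep M Y"
proof -
  have "(\<lambda>e. \<gamma> + {#e#}) ` Y = (+) \<gamma> ` ((\<lambda>e. {#e#}) ` Y)" by (simp add: image_image)
  moreover have "(\<lambda>e. {#e#}) ` Y \<subseteq> Sym 1 E" using assms(3) by (auto simp: Sym_def)
  moreover have "indep (Ms 1) ((\<lambda>e. {#e#}) ` Y) \<longleftrightarrow> indep M Y"
    using quasi_power assms(3) unfolding sym_quasi_power_def by blast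
  ultimately show ?thesis using indep_add_iff[of 1] assms d_pos by simp
qed

lemma spans_add_singletons:
  assumes \<gamma>: "\<gamma> \<in> Sym (d - 1) E" "loopfree \<gamma>" and X: "X \<subseteq> E" "e \<in> E" and sp: "M.spans X e"
  shows "N.spans ((\<lambda>e. \<gamma> + {#e#}) ` X) (\<gamma> + {#e#})"
proof -
  have rank: "rank_of N ((\<lambda>e. \<gamma> + {#e#}) ` Y) = rank_of M Y" if "Y \<subseteq> E" for Y
    using indep_add_singletons_iff[OF \<gamma>] that by (intro rank_of_image) (auto simp: inj_on_def)
  show ?thesis
    using rank[OF X(1)] rank[of "insert e X"] X sp unfolding M.spans_def N.spans_def by simp
qed

lemma circuit_add_singletons:
  assumes \<gamma>: "\<gamma> \<in> Sym (d - 1) E" "loopfree \<gamma>" and C: "circuit M C"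
  shows "circuit N ((\<lambda>e. \<gamma> + {#e#}) ` C)"
  unfolding circuit_def
proof (intro conjI ballI)
  have CE: "C \<subseteq> E" using C ground_M unfolding circuit_def by simp
  then show "(\<lambda>e. \<gamma> + {#e#}) ` C \<subseteq> ground N"
    using add_singleton_mem_Sym[OF \<gamma>(1)] d_pos unfolding ground_N by auto
  show "\<not> indep N ((\<lambda>e. \<gamma> + {#e#}) ` C)"
    using C CE indep_add_singletons_iff[OF \<gamma>] unfolding circuit_def by simp
  fix z assume "z \<in> (\<lambda>e. \<gamma> + {#e#}) ` C"
  then obtain c where "c \<in> C" "z = \<gamma> + {#c#}" by auto
  moreover have "(\<lambda>e. \<gamma> + {#e#}) ` C - {\<gamma> + {#c#}} = (\<lambda>e. \<gamma> + {#e#}) ` (C - {c})" by auto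
  moreover have "indep M (C - {c})" using C \<open>c \<in> C\<close> unfolding circuit_def by blast
  ultimately show "indep N ((\<lambda>e. \<gamma> + {#e#}) ` C - {z})"
    using indep_add_singletons_iff[OF \<gamma>, of "C - {c}"] CE by auto
qed

lemma circuit_singleton_if_loop:
  assumes y: "y \<in> Sym d E" and e: "e \<in># y" "loop M e"
  shows "circuit N {y}"
proof -
  have "\<not> indep N {y}"
  proof (cases "d = 1")
    case True
    then have "y = {#e#}" using y e(1) by (auto simp: Sym_def elim!: size_mset_SucE)
    then have "{y} = (\<lambda>x. {#} + {#x#}) ` {e}" by simp
    moreover have "e \<in> E" using y e(1) by (auto simp: Sym_def)
    moreover have "{#} \<in> Sym (d - 1) E" "loopfree {#}" using True by (simp_all add: Sym_0 loopfree_def)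
    ultimately show ?thesis
      using indep_add_singletons_iff[of "{#}" "{e}"] e(2) unfolding loop_def by simp
  next
    case False
    have de: "d - 1 \<in> {1..d}" "{#e#} \<in> Sym (d - (d - 1)) E"
      using False d_pos y e(1) by (auto simp: Sym_def)
    have "rank_of N ((+) {#e#} ` Sym (d - 1) E) = 0"
      by (rule rank_of_add_Sym_loop[OF de _ e(2)]) simp
    moreover have "y \<in> (+) {#e#} ` Sym (d - 1) E"
      by (rule rev_image_eqI[OF diff_singleton_mem_Sym[OF y e(1)]]) (use e(1) in simp)
    ultimately show ?thesis using N.card_le_rank_of[of "{y}" "(+) {#e#} ` Sym (d - 1) E"] by auto
  qed
  then show ?thesis using y N.indep_empty unfolding circuit_def ground_N by auto
qed

lemma indep_singleton_if_loopfree: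
  assumes y: "y \<in> Sym d E" and l: "loopfree y"
  shows "indep N {y}"
proof -
  obtain e where e: "e \<in># y" using Sym_ex_mem[OF y d_pos] by blast
  have "e \<in> E" "indep M {e}"
    using y e l indep_singleton_iff_not_loop by (auto simp: Sym_def loopfree_def)
  moreover have "loopfree (y - {#e#})" using l unfolding loopfree_def by (auto dest: in_diffD)
  moreover have "(\<lambda>x. (y - {#e#}) + {#x#}) ` {e} = {y}" using e by simp
  ultimately show ?thesis
    using indep_add_singletons_iff[of "y - {#e#}" "{e}"] diff_singleton_mem_Sym[OF y e] by simp
qed


lemma indep_singleton_iff_loopfree: "y \<in> Sym d E \<Longrightarrow> indep N {y} \<longleftrightarrow> loopfree y"
  using indep_singleton_if_loopfree circuit_singleton_if_loop unfolding loopfree_def circuit_def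
  by blast

lemma mem_bergman_fan_iff:
  "\<omega> \<in> bergman_fan n M \<longleftrightarrow> \<omega> \<in> tropn n \<and>
    (\<forall>C. circuit M C \<longrightarrow> (\<forall>x\<in>C. \<omega> x \<noteq> \<infinity> \<longrightarrow> (\<exists>y\<in>C - {x}. \<omega> y \<le> \<omega> x)))"
  unfolding bergman_fan_def by (rule M.mem_tropV_iff)

lemma mem_variety_iff:
  "\<omega> \<in> variety n N \<longleftrightarrow> \<omega> \<in> tropn n \<and>
    (\<forall>C. circuit N C \<longrightarrow> (\<forall>x\<in>C. mon_eval x \<omega> \<noteq> \<infinity> \<longrightarrow>
      (\<exists>y\<in>C - {x}. mon_eval y \<omega> \<le> mon_eval x \<omega>)))"
  unfolding variety_def by (rule N.mem_tropV_iff)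

lemma bergman_fan_loop:
  assumes "\<omega> \<in> bergman_fan n M" "loop M e"
  shows "\<omega> e = \<infinity>"
proof -
  have "circuit M {e}" using assms(2) M.indep_empty unfolding loop_def circuit_def by simp
  then show ?thesis using assms(1) unfolding mem_bergman_fan_iff by blast
qed

section \<open>Upper spanning sets of monomials\<close>

text \<open>
  A basis containing \<open>e\<close> of maximal total rank \<open>\<phi>\<close> (\<open>\<phi>\<close> ranks the values of \<open>\<omega>\<close>) is
  upper spanning: otherwise a fundamental circuit shows that \<open>e\<close> is the unique minimum
  of \<open>\<omega>\<close> on a circuit.
\<close>
lemma ex_upper_spanning_basis:
  assumes \<omega>: "\<omega> \<in> bergman_fan n M" and e: "e \<in> E" "\<not> loop M e"
  shows "\<exists>B. basis M B \<and> e \<in> B \<and> M.upper_spanning \<omega> B E"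
proof -
  obtain \<phi> :: "nat \<Rightarrow> nat" where "\<forall>b. \<forall>y\<in>E. \<omega> b < \<omega> y \<longrightarrow> \<phi> b < \<phi> y"
    using ex_nat_rank[of E \<omega>] by blast
  then have \<phi>: "\<phi> b < \<phi> y" if "y \<in> E" "\<omega> b < \<omega> y" for b y using that by blast
  define S where "S = {B. basis M B \<and> e \<in> B}"
  have "S \<subseteq> Pow (ground M)" unfolding S_def using M.indep_subset_ground M.basis_indep by blast
  then have fin_S: "finite S" using M.finite_ground finite_subset by blast
  obtain B0 where "basis M B0" "{e} \<subseteq> B0"
    using M.ex_basis_superset indep_singleton_iff_not_loop e by blast
  then have "Max (sum \<phi> ` S) \<in> sum \<phi> ` S" using fin_S by (intro Max_in) (auto simp: S_def)
  then obtain B where "B \<in> S" and B_max: "sum \<phi> B = Max (sum \<phi> ` S)" by auto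
  have B: "basis M B" "e \<in> B" using \<open>B \<in> S\<close> unfolding S_def by simp_all
  have max: "sum \<phi> B' \<le> sum \<phi> B" if "basis M B'" "e \<in> B'" for B'
    using Max_ge[OF finite_imageI[OF fin_S], of "sum \<phi> B'"] that B_max unfolding S_def by simp
  have "M.spans (B \<inter> {b. \<omega> y \<le> \<omega> b}) y" if y: "y \<in> E" for y
  proof (rule ccontr)
    assume not_spanned: "\<not> M.spans (B \<inter> {b. \<omega> y \<le> \<omega> b}) y"
    have "y \<in> ground M" using y ground_M by simp
    then obtain C where C: "circuit M C" "C \<subseteq> insert y B" "y \<in> C" "y \<notin> B"
      and "\<exists>b\<in>C - {y}. \<omega> b < \<omega> y"
      using M.ex_circuit_below_if_not_upper_spanned[OF B(1) _ not_spanned] by auto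
    then obtain b where b: "b \<in> C" "b \<noteq> y" "\<omega> b < \<omega> y" by blast
    have below_e: "c = e" if "c \<in> C" "c \<noteq> y" "\<omega> c < \<omega> y" for c
      using M.max_weight_basis_exchange[OF B max C(1,2,4) that(1,2) \<phi>[OF y that(3)]] .
    then have e_min: "e \<in> C" "\<omega> e < \<omega> y" using b by auto
    then have "\<omega> e \<noteq> \<infinity>" by auto
    then obtain c where c: "c \<in> C - {e}" "\<omega> c \<le> \<omega> e"
      using \<omega> C(1) e_min(1) unfolding mem_bergman_fan_iff by blast
    then have "\<not> \<omega> c < \<omega> y" using below_e[of c] by auto
    then have "\<omega> y \<le> \<omega> c" by (simp add: not_less)
    then show False using c e_min by simp
  qed
  then show ?thesis using B unfolding M.upper_spanning_def by blast
qed

lemma upper_spanning_add_singletons: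
  assumes "M.upper_spanning \<omega> B E" "B \<subseteq> E" "\<alpha> \<in> Sym (d - 1) E" "loopfree \<alpha>"
  shows "N.upper_spanning (\<lambda>z. mon_eval z \<omega>) ((\<lambda>b. \<alpha> + {#b#}) ` B) ((\<lambda>e. \<alpha> + {#e#}) ` E)"
  unfolding N.upper_spanning_def
proof
  fix y assume "y \<in> (\<lambda>e. \<alpha> + {#e#}) ` E"
  then obtain e where e: "e \<in> E" "y = \<alpha> + {#e#}" by blast
  have "M.spans (B \<inter> {b. \<omega> e \<le> \<omega> b}) e" using assms(1) e(1) unfolding M.upper_spanning_def by blast
  moreover have "B \<inter> {b. \<omega> e \<le> \<omega> b} \<subseteq> E" using assms(2) by blast
  ultimately have "N.spans ((\<lambda>b. \<alpha> + {#b#}) ` (B \<inter> {b. \<omega> e \<le> \<omega> b})) y"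
    using spans_add_singletons[OF assms(3,4) _ e(1)] e(2) by simp
  moreover have "(\<lambda>b. \<alpha> + {#b#}) ` (B \<inter> {b. \<omega> e \<le> \<omega> b})
      \<subseteq> (\<lambda>b. \<alpha> + {#b#}) ` B \<inter> {z. mon_eval y \<omega> \<le> mon_eval z \<omega>}"
    using e(2) by (auto simp: mon_eval_add_mset add_right_mono)
  ultimately show "N.spans ((\<lambda>b. \<alpha> + {#b#}) ` B \<inter> {z. mon_eval y \<omega> \<le> mon_eval z \<omega>}) y"
    by (rule N.spans_mono[rotated])
qed

text \<open>
  Write \<open>y = \<alpha> + e\<close>: in the copy \<open>\<alpha> + E\<close> of \<open>M\<close> the monomials \<open>\<alpha> + b\<close>, \<open>b \<in> B\<close>, upper
  span \<open>y\<close>, and each \<open>\<alpha> + b\<close> is handled by induction with \<open>b\<close> moved into the prefix \<open>\<gamma>\<close>.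
\<close>
lemma upper_spanning_add_Sym_Suc:
  assumes B: "indep M B" "M.upper_spanning \<omega> B E"
    and IH: "\<And>\<gamma>'. \<gamma>' \<in> Sym (d - j) E \<Longrightarrow> loopfree \<gamma>' \<Longrightarrow>
      N.upper_spanning (\<lambda>z. mon_eval z \<omega>) ((+) \<gamma>' ` Sym j B) ((+) \<gamma>' ` Sym j E)"
    and \<gamma>: "Suc j \<le> d" "\<gamma> \<in> Sym (d - Suc j) E" "loopfree \<gamma>"
    and \<beta>: "\<beta> \<in> Sym (Suc j) E" "loopfree (\<gamma> + \<beta>)"
  shows "N.upper_spanning (\<lambda>z. mon_eval z \<omega>) ((+) \<gamma> ` Sym (Suc j) B) {\<gamma> + \<beta>}"
proof -
  define w where "w z = mon_eval z \<omega>" for z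
  define P where "P = (+) \<gamma> ` Sym (Suc j) B"
  have BE: "B \<subseteq> E" using M.indep_subset_ground[OF B(1)] ground_M by simp
  obtain e where e: "e \<in># \<beta>" using Sym_ex_mem[OF \<beta>(1)] by blast
  define \<alpha> where "\<alpha> = \<gamma> + (\<beta> - {#e#})"
  have \<alpha>: "\<alpha> \<in> Sym (d - 1) E" "loopfree \<alpha>" "\<gamma> + \<beta> = \<alpha> + {#e#}"
    using add_mem_Sym[OF \<gamma>(2) diff_singleton_mem_Sym[OF \<beta>(1) e]] \<gamma>(1) \<beta>(2) e
    unfolding \<alpha>_def loopfree_def by (auto dest: in_diffD)
  have "e \<in> E" using \<beta>(1) e by (auto simp: Sym_def)
  then have "N.upper_spanning w ((\<lambda>b. \<alpha> + {#b#}) ` B) {\<gamma> + \<beta>}"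
    using upper_spanning_add_singletons[OF B(2) BE \<alpha>(1,2)] \<alpha>(3) unfolding w_def
    by (rule_tac N.upper_spanning_mono) auto
  moreover have "N.upper_spanning w P {\<alpha> + {#b#}}" if b: "b \<in> B" for b
  proof -
    have \<gamma>b: "\<gamma> + {#b#} \<in> Sym (d - j) E" "loopfree (\<gamma> + {#b#})"
      using add_singleton_mem_Sym[OF \<gamma>(2)] \<gamma>(1,3) b BE loopfree_if_indep[OF B(1), of "{#b#}"]
      by (auto simp: Suc_diff_Suc loopfree_def)
    have "N.upper_spanning w ((+) (\<gamma> + {#b#}) ` Sym j B) ((+) (\<gamma> + {#b#}) ` Sym j E)"
      using IH[OF \<gamma>b] unfolding w_def .
    moreover have "(+) (\<gamma> + {#b#}) ` Sym j B \<subseteq> P"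
      using image_add_Sym_Suc[OF b, of \<gamma> j] unfolding P_def by blast
    moreover have "{\<alpha> + {#b#}} \<subseteq> (+) (\<gamma> + {#b#}) ` Sym j E"
      using diff_singleton_mem_Sym[OF \<beta>(1) e] unfolding \<alpha>_def by (auto simp: ac_simps)
    ultimately show ?thesis by (rule N.upper_spanning_mono)
  qed
  then have "N.upper_spanning w P ((\<lambda>b. \<alpha> + {#b#}) ` B)"
    unfolding N.upper_spanning_def by blast
  ultimately show ?thesis unfolding P_def w_def by (rule N.upper_spanning_trans)
qed

lemma upper_spanning_add_Sym:
  assumes B: "indep M B" "M.upper_spanning \<omega> B E"
  shows "j \<le> d \<Longrightarrow> \<gamma> \<in> Sym (d - j) E \<Longrightarrow> loopfree \<gamma> \<Longrightarrow>
    N.upper_spanning (\<lambda>z. mon_eval z \<omega>) ((+) \<gamma> ` Sym j B) ((+) \<gamma> ` Sym j E)"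
proof (induction j arbitrary: \<gamma>)
  case 0
  then show ?case using N.upper_spanning_refl by (simp add: Sym_0)
next
  case (Suc j)
  have "N.upper_spanning (\<lambda>z. mon_eval z \<omega>) ((+) \<gamma> ` Sym (Suc j) B) {\<gamma> + \<beta>}"
    if \<beta>: "\<beta> \<in> Sym (Suc j) E" for \<beta>
  proof (cases "loopfree (\<gamma> + \<beta>)")
    case True
    show ?thesis by (rule upper_spanning_add_Sym_Suc[OF B _ Suc.prems \<beta> True]) (use Suc in auto)
  next
    case False
    have "\<gamma> + \<beta> \<in> Sym d E" using add_mem_Sym[OF Suc.prems(2) \<beta>] Suc.prems(1) by simp
    then have "\<not> indep N {\<gamma> + \<beta>}" using False indep_singleton_iff_loopfree by blast
    then show ?thesis unfolding N.upper_spanning_def by (simp add: N.spans_loop)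
  qed
  then show ?case unfolding N.upper_spanning_def by blast
qed

lemma spans_Sym_basis:
  assumes "basis M B" "y \<in> Sym d E"
  shows "N.spans (Sym d B) y"
proof -
  have "M.upper_spanning (\<lambda>_. 0::ereal) B E"
    using M.basis_spans[OF assms(1)] unfolding M.upper_spanning_def by simp
  then have "N.upper_spanning (\<lambda>z. mon_eval z (\<lambda>_. 0)) ((+) {#} ` Sym d B) ((+) {#} ` Sym d E)"
    using upper_spanning_add_Sym[OF M.basis_indep[OF assms(1)], of "\<lambda>_. 0" d "{#}"]
    by (simp add: Sym_0 loopfree_def)
  then show ?thesis using N.upper_spanning_spans assms(2) by simp
qed

lemma basis_Sym_iff_indep:
  assumes "basis M B"
  shows "basis N (Sym d B) \<longleftrightarrow> indep N (Sym d B)"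
proof
  assume indep: "indep N (Sym d B)"
  have "Sym d B \<subseteq> Sym d E"
    using Sym_mono M.indep_subset_ground[OF M.basis_indep[OF assms]] ground_M by simp
  then have "rk N = card (Sym d B)"
    using N.rank_of_spanning_indep[OF indep] spans_Sym_basis[OF assms] unfolding rk_def ground_N
    by blast
  then show "basis N (Sym d B)" using N.basis_if_card_rk[OF indep] by simp
qed (rule N.basis_indep)

lemma rk_eq_iff_basis_Sym:
  assumes "basis M B"
  shows "rk N = (rk M + d - 1) choose d \<longleftrightarrow> basis N (Sym d B)"
proof -
  have fin: "finite (Sym d B)"
    using finite_Sym M.indep_finite[OF M.basis_indep[OF assms]] by blast
  have "Sym d B \<union> Sym d E = Sym d E"
    using Sym_mono M.indep_subset_ground[OF M.basis_indep[OF assms]] ground_M by auto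
  then have "rk N = rank_of N (Sym d B)"
    using N.rank_of_Un_spanned[of "Sym d E" "Sym d B"] spans_Sym_basis[OF assms]
    unfolding rk_def ground_N by simp
  moreover have "card (Sym d B) = (rk M + d - 1) choose d"
    using card_Sym[OF M.indep_finite[OF M.basis_indep[OF assms]]] M.card_basis[OF assms] by simp
  ultimately show ?thesis using N.indep_iff_rank_of[OF fin] basis_Sym_iff_indep[OF assms] by simp
qed

lemma indep_add_Sym_basis:
  assumes Sym_basis: "\<forall>B. basis M B \<longrightarrow> basis N (Sym d B)" and B: "basis M B"
    and i: "i \<in> {1..d}" and \<gamma>: "\<gamma> \<in> Sym (d - i) E" "loopfree \<gamma>"
  shows "indep N ((+) \<gamma> ` Sym i B)"
proof (cases "B = {}")
  case True
  moreover have "0 < i" using i by simp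
  ultimately show ?thesis using N.indep_empty by (simp add: Sym_empty)
next
  case False
  then obtain b where b: "b \<in> B" by blast
  have BE: "B \<subseteq> E" using M.indep_subset_ground[OF M.basis_indep[OF B]] ground_M by simp
  define \<gamma>0 where "\<gamma>0 = replicate_mset (d - i) b"
  have \<gamma>0: "\<gamma>0 \<in> Sym (d - i) E" "loopfree \<gamma>0" "\<gamma>0 \<in> Sym (d - i) B"
    using b BE loopfree_if_indep[OF M.basis_indep[OF B], of \<gamma>0] unfolding \<gamma>0_def Sym_def by auto
  have "(+) \<gamma>0 ` Sym i B \<subseteq> Sym d B" using add_mem_Sym[OF \<gamma>0(3), of _ i] i by auto
  then have "indep N ((+) \<gamma>0 ` Sym i B)"
    using N.indep_subset N.basis_indep Sym_basis B by metis
  then have "indep (Ms i) (Sym i B)" using indep_add_iff[OF i \<gamma>0(1,2) Sym_mono[OF BE]] by simp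
  then show ?thesis using indep_add_iff[OF i \<gamma> Sym_mono[OF BE]] by simp
qed

text \<open>
  \<open>\<gamma> + Sym (k + 1) B\<close> is independent and upper spanning; its monomials divisible by
  \<open>\<gamma> + e\<close> are exchanged for \<open>P'\<close>.
\<close>
lemma indep_upper_spanning_replace:
  assumes Sym_basis: "\<forall>B. basis M B \<longrightarrow> basis N (Sym d B)"
    and B: "basis M B" "e \<in> B" "M.upper_spanning \<omega> B E"
    and \<gamma>: "Suc k \<le> d" "\<gamma> \<in> Sym (d - Suc k) E" "loopfree \<gamma>"
    and P': "P' \<subseteq> (+) (\<gamma> + {#e#}) ` Sym k E" "indep N P'"
      "N.upper_spanning (\<lambda>z. mon_eval z \<omega>) P' ((+) (\<gamma> + {#e#}) ` Sym k E)"
  defines "R \<equiv> (+) \<gamma> ` Sym (Suc k) (B - {e})"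
  shows "P' \<union> R \<subseteq> (+) \<gamma> ` Sym (Suc k) E \<and> indep N (P' \<union> R) \<and>
    N.upper_spanning (\<lambda>z. mon_eval z \<omega>) (P' \<union> R) ((+) \<gamma> ` Sym (Suc k) E)"
proof (intro conjI)
  define w where "w z = mon_eval z \<omega>" for z
  define Qe where "Qe = (+) (\<gamma> + {#e#}) ` Sym k B"
  have iB: "indep M B" by (rule M.basis_indep[OF B(1)])
  have BE: "B \<subseteq> E" using M.indep_subset_ground[OF iB] ground_M by simp
  have \<gamma>e: "\<gamma> + {#e#} \<in> Sym (d - k) E" "loopfree (\<gamma> + {#e#})"
    using add_singleton_mem_Sym[OF \<gamma>(2)] \<gamma>(1,3) B(2) BE loopfree_if_indep[OF iB, of "{#e#}"]
    by (auto simp: Suc_diff_Suc loopfree_def)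
  have Q: "Qe \<union> R = (+) \<gamma> ` Sym (Suc k) B"
    using image_add_Sym_Suc[OF B(2)] unfolding Qe_def R_def by simp
  have "indep N (Qe \<union> R)"
    using indep_add_Sym_basis[OF Sym_basis B(1) _ \<gamma>(2,3)] \<gamma>(1) Q by simp
  moreover have "N.upper_spanning w (Qe \<union> R) ((+) \<gamma> ` Sym (Suc k) E)"
    using upper_spanning_add_Sym[OF iB B(3) \<gamma>] Q unfolding w_def by simp
  moreover have "Qe \<inter> R = {}" unfolding Qe_def R_def by (rule image_add_Sym_disjoint)
  moreover have "Qe \<subseteq> (+) (\<gamma> + {#e#}) ` Sym k E" using Sym_mono[OF BE] unfolding Qe_def by blast
  moreover have "N.upper_spanning w Qe ((+) (\<gamma> + {#e#}) ` Sym k E)"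
    using upper_spanning_add_Sym[OF iB B(3) _ \<gamma>e] \<gamma>(1) unfolding Qe_def w_def by simp
  then have "\<forall>y\<in>(+) (\<gamma> + {#e#}) ` Sym k E. N.spans Qe y" using N.upper_spanning_spans by blast
  moreover have "P' \<inter> R = {}"
    using P'(1) image_add_Sym_disjoint[of \<gamma> e "Sym k E" "Suc k" B] unfolding R_def by blast
  ultimately show "indep N (P' \<union> R)" "N.upper_spanning w (P' \<union> R) ((+) \<gamma> ` Sym (Suc k) E)"
    using N.upper_spanning_exchange[of Qe R w _ _ P'] P'[unfolded w_def[symmetric]] by blast+
  show "P' \<union> R \<subseteq> (+) \<gamma> ` Sym (Suc k) E"
    using P'(1) image_add_Sym_Suc[OF subsetD[OF BE B(2)], of \<gamma> k] Sym_mono[of "B - {e}" E] BE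
    unfolding R_def by blast
qed

text \<open>
  Induction on \<open>k\<close>, moving a factor \<open>e\<close> of \<open>\<beta>\<close> into \<open>\<gamma>\<close> and using an \<open>\<omega>\<close>-maximal basis
  containing \<open>e\<close>.
\<close>
lemma ex_indep_upper_spanning:
  assumes Sym_basis: "\<forall>B. basis M B \<longrightarrow> basis N (Sym d B)" and \<omega>: "\<omega> \<in> bergman_fan n M"
  shows "k \<le> d \<Longrightarrow> \<gamma> \<in> Sym (d - k) E \<Longrightarrow> loopfree \<gamma> \<Longrightarrow> \<beta> \<in> Sym k E \<Longrightarrow> loopfree \<beta> \<Longrightarrow>
    \<exists>P \<subseteq> (+) \<gamma> ` Sym k E. indep N P \<and> \<gamma> + \<beta> \<in> P \<and>
      N.upper_spanning (\<lambda>z. mon_eval z \<omega>) P ((+) \<gamma> ` Sym k E)"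
proof (induction k arbitrary: \<gamma> \<beta>)
  case 0
  then have "indep N {\<gamma>}" "\<beta> = {#}" using indep_singleton_if_loopfree by (auto simp: Sym_0)
  then show ?case using N.upper_spanning_refl by (intro exI[of _ "{\<gamma>}"]) (simp add: Sym_0)
next
  case (Suc k)
  obtain e where e: "e \<in># \<beta>" using Sym_ex_mem[OF Suc.prems(4)] by blast
  have eE: "e \<in> E" and e_nonloop: "\<not> loop M e"
    using Suc.prems(4,5) e by (auto simp: Sym_def loopfree_def)
  have \<gamma>e: "\<gamma> + {#e#} \<in> Sym (d - k) E" "loopfree (\<gamma> + {#e#})"
    using add_singleton_mem_Sym[OF Suc.prems(2) eE] Suc.prems(1,3) e_nonloop
    unfolding loopfree_def by (auto simp: Suc_diff_Suc)
  have \<beta>': "\<beta> - {#e#} \<in> Sym k E" "loopfree (\<beta> - {#e#})" "\<gamma> + {#e#} + (\<beta> - {#e#}) = \<gamma> + \<beta>"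
    using diff_singleton_mem_Sym[OF Suc.prems(4) e] Suc.prems(5) e
    unfolding loopfree_def by (auto dest: in_diffD)
  have "k \<le> d" using Suc.prems(1) by simp
  from Suc.IH[OF this \<gamma>e \<beta>'(1,2)] obtain P' where
    P': "P' \<subseteq> (+) (\<gamma> + {#e#}) ` Sym k E" "indep N P'" "\<gamma> + \<beta> \<in> P'"
      "N.upper_spanning (\<lambda>z. mon_eval z \<omega>) P' ((+) (\<gamma> + {#e#}) ` Sym k E)"
    unfolding \<beta>'(3) by blast
  obtain B where "basis M B" "e \<in> B" "M.upper_spanning \<omega> B E"
    using ex_upper_spanning_basis[OF \<omega> eE e_nonloop] by blast
  from indep_upper_spanning_replace[OF Sym_basis this Suc.prems(1-3) P'(1,2,4)]
  show ?case using P'(3) by blast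
qed

section \<open>The variety of the quasi power and the Bergman fan\<close>

lemma bergman_fan_subset_variety:
  assumes Sym_basis: "\<forall>B. basis M B \<longrightarrow> basis N (Sym d B)"
  shows "bergman_fan n M \<subseteq> variety n N"
proof
  fix \<omega> assume \<omega>: "\<omega> \<in> bergman_fan n M"
  have "\<exists>y\<in>C - {x}. mon_eval y \<omega> \<le> mon_eval x \<omega>"
    if C: "circuit N C" "x \<in> C" "mon_eval x \<omega> \<noteq> \<infinity>" for C x
  proof -
    have CS: "C \<subseteq> Sym d E" using C(1) ground_N unfolding circuit_def by simp
    have "loopfree x" using bergman_fan_loop[OF \<omega>] mon_eval_infinity C(3) unfolding loopfree_def by blast
    then obtain P where P: "indep N P" "x \<in> P" "N.upper_spanning (\<lambda>z. mon_eval z \<omega>) P (Sym d E)"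
      using ex_indep_upper_spanning[OF Sym_basis \<omega>, of d "{#}" x] CS C(2)
      by (auto simp: Sym_0 loopfree_def)
    show ?thesis by (rule N.circuit_ex_le_if_upper_spanning[OF P(1,3) C(1) CS C(2) P(2)])
  qed
  then show "\<omega> \<in> variety n N" using \<omega> unfolding mem_variety_iff mem_bergman_fan_iff by blast
qed

lemma variety_loop:
  assumes \<omega>: "\<omega> \<in> variety n N" and x: "loop M x"
  shows "\<omega> x = \<infinity>"
proof (rule ccontr)
  assume "\<omega> x \<noteq> \<infinity>"
  moreover have xE: "x \<in> E" using x ground_M unfolding loop_def by simp
  moreover have "\<omega> x \<noteq> -\<infinity>" using \<omega> xE unfolding mem_variety_iff tropn_def by simp
  ultimately have "\<bar>mon_eval (replicate_mset d x) \<omega>\<bar> \<noteq> \<infinity>"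
    by (intro mon_eval_finite) (auto split: if_splits)
  moreover have "replicate_mset d x \<in> Sym d E" "x \<in># replicate_mset d x"
    using xE d_pos unfolding Sym_def by auto
  ultimately show False
    using \<omega> circuit_singleton_if_loop[OF _ _ x] unfolding mem_variety_iff by fastforce
qed

lemma variety_subset_bergman_fan: "variety n N \<subseteq> bergman_fan n M"
proof
  fix \<omega> assume \<omega>: "\<omega> \<in> variety n N"
  have tn: "\<omega> \<in> tropn n" using \<omega> unfolding mem_variety_iff by simp
  have "\<exists>y\<in>C - {x}. \<omega> y \<le> \<omega> x" if C: "circuit M C" "x \<in> C" "\<omega> x \<noteq> \<infinity>" for C x
  proof -
    have "C \<subseteq> E" using C(1) ground_M unfolding circuit_def by simp
    then have fin: "\<bar>\<omega> x\<bar> \<noteq> \<infinity>" using tn C(2,3) unfolding tropn_def by auto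
    define \<alpha> where "\<alpha> = replicate_mset (d - 1) x"
    have \<alpha>: "\<alpha> \<in> Sym (d - 1) E" "loopfree \<alpha>"
      using \<open>C \<subseteq> E\<close> C(2,3) variety_loop[OF \<omega>] unfolding \<alpha>_def Sym_def loopfree_def by auto
    have fin_\<alpha>: "\<bar>mon_eval \<alpha> \<omega>\<bar> \<noteq> \<infinity>"
      unfolding \<alpha>_def by (rule mon_eval_finite) (use fin in \<open>auto split: if_splits\<close>)
    then have "mon_eval (\<alpha> + {#x#}) \<omega> \<noteq> \<infinity>"
      using fin unfolding mon_eval_add mon_eval_singleton by auto
    then obtain z where "z \<in> (\<lambda>e. \<alpha> + {#e#}) ` C - {\<alpha> + {#x#}}"
      "mon_eval z \<omega> \<le> mon_eval (\<alpha> + {#x#}) \<omega>"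
      using \<omega> circuit_add_singletons[OF \<alpha> C(1)] C(2) unfolding mem_variety_iff by blast
    then obtain y where "y \<in> C - {x}" "\<omega> y + mon_eval \<alpha> \<omega> \<le> \<omega> x + mon_eval \<alpha> \<omega>"
      by (auto simp: mon_eval_add_mset)
    then show ?thesis using fin_\<alpha> ereal_add_le_add_iff2 by auto
  qed
  then show "\<omega> \<in> bergman_fan n M" using tn unfolding mem_bergman_fan_iff by blast
qed

lemma shift_mem_bergman_fan:
  assumes "\<omega> \<in> bergman_fan n M"
  shows "(\<lambda>j. if j \<in> E then \<omega> j - ereal c else \<omega> j) \<in> bergman_fan n M"
proof -
  define \<omega>' where "\<omega>' = (\<lambda>j. if j \<in> E then \<omega> j - ereal c else \<omega> j)"
  have tn: "\<omega> \<in> tropn n" using assms unfolding mem_bergman_fan_iff by simp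
  then have "\<omega>' \<in> tropn n" unfolding tropn_def \<omega>'_def by (auto simp: minus_ereal_def)
  moreover have "\<exists>y\<in>C - {x}. \<omega>' y \<le> \<omega>' x" if C: "circuit M C" "x \<in> C" "\<omega>' x \<noteq> \<infinity>" for C x
  proof -
    have CE: "C \<subseteq> E" using C(1) ground_M unfolding circuit_def by simp
    then have "\<omega> x \<noteq> \<infinity>" using C(2,3) unfolding \<omega>'_def by auto
    then obtain y where y: "y \<in> C - {x}" "\<omega> y \<le> \<omega> x"
      using assms C(1,2) unfolding mem_bergman_fan_iff by blast
    have "\<omega>' y \<le> \<omega>' x"
      using CE C(2) y ereal_minus_mono[of "\<omega> y" "\<omega> x" "ereal c" "ereal c"] unfolding \<omega>'_def by auto
    then show ?thesis using y(1) by blast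
  qed
  ultimately show ?thesis unfolding mem_bergman_fan_iff \<omega>'_def by blast
qed

lemma flat_positive_if_variety:
  assumes "\<omega> \<in> variety n N"
  shows "flat N {x \<in> Sym d E. 0 < mon_eval x \<omega>}"
proof (rule N.flat_if_circuit_closed)
  show "{x \<in> Sym d E. 0 < mon_eval x \<omega>} \<subseteq> ground N" unfolding ground_N by blast
  fix C e assume C: "circuit N C" "e \<in> C" "C - {e} \<subseteq> {x \<in> Sym d E. 0 < mon_eval x \<omega>}"
  show "e \<in> {x \<in> Sym d E. 0 < mon_eval x \<omega>}"
  proof (rule ccontr)
    assume e_out: "e \<notin> {x \<in> Sym d E. 0 < mon_eval x \<omega>}"
    have "e \<in> Sym d E" using C(1,2) ground_N unfolding circuit_def by blast
    then have e_le: "mon_eval e \<omega> \<le> 0" using e_out by (simp add: not_less)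
    then have "mon_eval e \<omega> \<noteq> \<infinity>" by auto
    then obtain y where y: "y \<in> C - {e}" "mon_eval y \<omega> \<le> mon_eval e \<omega>"
      using assms C(1,2) unfolding mem_variety_iff by blast
    then have "0 < mon_eval y \<omega>" using C(3) by blast
    then show False using y(2) e_le by simp
  qed
qed

lemma variety_if_flats:
  assumes flats: "\<forall>\<omega>\<in>bergman_fan n M. flat N {x \<in> Sym d E. 0 < mon_eval x \<omega>}"
    and \<omega>: "\<omega> \<in> bergman_fan n M"
  shows "\<omega> \<in> variety n N"
proof -
  have tn: "\<omega> \<in> tropn n" using \<omega> unfolding mem_bergman_fan_iff by simp
  have fin: "mon_eval z \<omega> \<noteq> -\<infinity>" if "z \<in> Sym d E" for z
    using tn that mon_eval_neq_minf[of z \<omega>] unfolding tropn_def Sym_def by auto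
  have "\<exists>y\<in>C - {x}. mon_eval y \<omega> \<le> mon_eval x \<omega>"
    if C: "circuit N C" "x \<in> C" "mon_eval x \<omega> \<noteq> \<infinity>" for C x
  proof (rule ccontr)
    assume above: "\<not> (\<exists>y\<in>C - {x}. mon_eval y \<omega> \<le> mon_eval x \<omega>)"
    have CS: "C \<subseteq> Sym d E" using C(1) ground_N unfolding circuit_def by simp
    obtain m where m: "mon_eval x \<omega> = ereal m" using C(2,3) CS fin by (cases "mon_eval x \<omega>") auto
    define \<omega>' where "\<omega>' = (\<lambda>j. if j \<in> E then \<omega> j - ereal (m / d) else \<omega> j)"
    have shift: "mon_eval z \<omega>' = mon_eval z \<omega> - ereal m" if "z \<in> Sym d E" for z
      using that mon_eval_shift[of z E \<omega> "m / d"] tn d_pos unfolding \<omega>'_def tropn_def Sym_def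
      by auto
    have pos: "0 < mon_eval z \<omega>' \<longleftrightarrow> ereal m < mon_eval z \<omega>" if "z \<in> Sym d E" for z
      using shift[OF that] fin[OF that] by (cases "mon_eval z \<omega>") auto
    have "flat N {z \<in> Sym d E. 0 < mon_eval z \<omega>'}"
      using flats shift_mem_bergman_fan[OF \<omega>] unfolding \<omega>'_def by blast
    moreover have "C - {x} \<subseteq> {z \<in> Sym d E. 0 < mon_eval z \<omega>'}"
      using above CS pos m by (auto simp: not_le)
    ultimately have "x \<in> {z \<in> Sym d E. 0 < mon_eval z \<omega>'}" using N.flat_circuit_closed C by blast
    then show False using pos[of x] m by auto
  qed
  then show ?thesis using tn unfolding mem_variety_iff by blast
qed

text \<open>
  The extension gives a non-loop \<open>e\<close> the weight \<open>c (level f r e)\<close>.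
\<close>
lemma ex_bergman_fan_extension:
  fixes f :: "nat \<Rightarrow> nat" and c :: "nat \<Rightarrow> real"
  assumes B: "basis M (f ` {0..<r})" "inj_on f {0..<r}" and c: "strict_mono c"
  shows "\<exists>\<omega>\<in>bergman_fan n M. \<forall>j<r. \<omega> (f j) = ereal (c j)"
proof -
  define \<omega> where
    "\<omega> e = (if e \<in> E then if loop M e then \<infinity> else ereal (c (M.level f r e)) else 0)" for e
  have BE: "f ` {0..<r} \<subseteq> E" using M.indep_subset_ground[OF M.basis_indep[OF B(1)]] ground_M by simp
  have tropical: "\<exists>y\<in>C - {x}. \<omega> y \<le> \<omega> x" if C: "circuit M C" "x \<in> C" "\<omega> x \<noteq> \<infinity>" for C x
  proof -
    have CE: "C \<subseteq> E" using C(1) ground_M unfolding circuit_def by simp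
    then have "x \<in> E" using C(2) by blast
    then have "indep M {x}" using C(3) indep_singleton_iff_not_loop unfolding \<omega>_def by auto
    then obtain y where y: "y \<in> C - {x}" "indep M {y}" "M.level f r y \<le> M.level f r x"
      using M.circuit_ex_level_le[OF B(1) C(1,2)] by blast
    have "y \<in> E" using CE y(1) by blast
    moreover have "c (M.level f r y) \<le> c (M.level f r x)"
      using strict_mono_mono[OF c] y(3) by (rule monoD)
    ultimately have "\<omega> y \<le> \<omega> x"
      using \<open>x \<in> E\<close> \<open>indep M {x}\<close> y(2) indep_singleton_iff_not_loop unfolding \<omega>_def by auto
    then show ?thesis using y(1) by blast
  qed
  have "\<omega> \<in> tropn n" unfolding tropn_def \<omega>_def by auto
  then have "\<omega> \<in> bergman_fan n M" using tropical unfolding mem_bergman_fan_iff by blast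
  moreover have "\<omega> (f j) = ereal (c j)" if "j < r" for j
  proof -
    have fj: "f j \<in> f ` {0..<r}" using that by simp
    then have "f j \<in> E" "indep M {f j}"
      using subsetD[OF BE] M.indep_subset[OF M.basis_indep[OF B(1)]] by auto
    then show ?thesis
      using M.level_enum[OF B(2) M.basis_indep[OF B(1)] that] indep_singleton_iff_not_loop
      unfolding \<omega>_def by simp
  qed
  ultimately show ?thesis by blast
qed

lemma basis_Sym_if_bergman_fan_subset_variety:
  assumes subset: "bergman_fan n M \<subseteq> variety n N" and B: "basis M B"
  shows "basis N (Sym d B)"
proof -
  have fin: "finite B" by (rule M.indep_finite[OF M.basis_indep[OF B]])
  obtain f where f: "bij_betw f {0..<card B} B" using ex_bij_betw_nat_finite[OF fin] by blast
  define r where "r = card B"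
  define K where "K = Suc d"
  have fB: "f ` {0..<r} = B" "inj_on f {0..<r}" using f unfolding bij_betw_def r_def by auto
  have "strict_mono (\<lambda>j. real (K ^ j))" unfolding K_def strict_mono_def using d_pos by simp
  then obtain \<omega> where "\<omega> \<in> bergman_fan n M" and \<omega>B: "\<forall>j<r. \<omega> (f j) = ereal (K ^ j)"
    using ex_bergman_fan_extension[of f r] fB B by auto
  then have \<omega>: "\<omega> \<in> variety n N" using subset by blast
  define code where "code z = (\<Sum>j<r. count z (f j) * K ^ j)" for z
  have weight: "mon_eval z \<omega> = ereal (code z)" if "z \<in> Sym d B" for z
    using mon_eval_digits[OF fB(2) \<omega>B] that fB(1) unfolding Sym_def code_def by simp
  have "inj_on code (Sym d B)"
    using fB(1) unfolding K_def code_def by (intro inj_on_digits) (auto simp: Sym_def)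
  then have inj: "inj_on (\<lambda>z. mon_eval z \<omega>) (Sym d B)"
    by (simp add: inj_on_def weight)
  have "indep N (Sym d B)"
  proof (rule ccontr)
    assume "\<not> indep N (Sym d B)"
    moreover have "Sym d B \<subseteq> ground N"
      using Sym_mono M.indep_subset_ground[OF M.basis_indep[OF B]] ground_M ground_N by simp
    ultimately obtain D where D: "D \<subseteq> Sym d B" "circuit N D"
      using N.dependent_contains_circuit by blast
    have "mon_eval z \<omega> \<noteq> \<infinity>" if "z \<in> D" for z
      using weight subsetD[OF D(1) that] by simp
    then have "\<not> inj_on (\<lambda>z. mon_eval z \<omega>) D"
      using N.tropV_not_inj_on_circuit[OF \<omega>[unfolded variety_def] D(2)] by blast
    then show False using inj_on_subset[OF inj D(1)] by blast
  qed
  then show ?thesis using basis_Sym_iff_indep[OF B] by blast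
qed

end

theorem proposition2p21:
  fixes n d :: nat and M :: "nat matroid" and Ms :: "nat \<Rightarrow> nat multiset matroid"
  assumes "is_matroid M" and "ground M = {1..n}"
    and "sym_quasi_power n M d Ms"
  shows "(rk (Ms d) = (rk M + d - 1) choose d
           \<longleftrightarrow> (\<forall>B. basis M B \<longrightarrow> basis (Ms d) (Sym d B)))
       \<and> ((\<forall>B. basis M B \<longrightarrow> basis (Ms d) (Sym d B))
           \<longleftrightarrow> variety n (Ms d) = bergman_fan n M)
       \<and> (variety n (Ms d) = bergman_fan n M
           \<longleftrightarrow> (\<forall>\<omega>\<in>bergman_fan n M. flat (Ms d) {x\<in>Sym d {1..n}. mon_eval x \<omega> > 0}))"
proof -
  interpret symmetric_quasi_power n d M Ms
    using assms by (rule symmetric_quasi_power.intro)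
  obtain B0 where "basis M B0" using M.ex_basis_superset[OF M.indep_empty] by blast
  then have "rk N = (rk M + d - 1) choose d \<longleftrightarrow> (\<forall>B. basis M B \<longrightarrow> basis N (Sym d B))"
    using rk_eq_iff_basis_Sym by blast
  moreover have "(\<forall>B. basis M B \<longrightarrow> basis N (Sym d B)) \<longleftrightarrow> variety n N = bergman_fan n M"
    using bergman_fan_subset_variety variety_subset_bergman_fan
      basis_Sym_if_bergman_fan_subset_variety by blast
  moreover have "variety n N = bergman_fan n M \<longleftrightarrow>
      (\<forall>\<omega>\<in>bergman_fan n M. flat N {x \<in> Sym d E. 0 < mon_eval x \<omega>})"
    using variety_subset_bergman_fan flat_positive_if_variety variety_if_flats by blast
  ultimately show ?thesis by blast
qed

end
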